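(* Consider the algorithm described in the context, where $\psi$ can be truncated, and suppose it does not terminate after finitely many steps. Assume (A.1) $\psi$ is bounded from below; (A.2) whenever $g(x)\ne0$, there exist $r,\epsilon>0$ with $\|g(y)\|\ge\epsilon$ for all $y\in B_r(x)$; (B.1) there is $R>0$ with $\{x^k\}\subseteq B_R(0)$; (B.2) there is $\kappa_B>0$ with $\sup_k\|B^k\|\le\kappa_B$; (B.3) for every subsequence $\{k_\ell\}$ such that $\{x^{k_\ell}\}$ converges and $\alpha_{k_\ell}\to0$, $\psi(x^{k_\ell}+\alpha_{k_\ell}\bar s^{k_\ell})-\psi(x^{k_\ell})-\alpha_{k_\ell}\psi'(x^{k_\ell};\bar s^{k_\ell})=o(\alpha_{k_\ell})$ as $\ell\to\infty$; (B.4) for every $\epsilon>0$ there is $\epsilon'>0$ such that $\Gamma(x^k)\ge\epsilon$ implies $\Gamma(x^k,\bar s^k)\ge\epsilon'$. Then for any symmetric positive definite matrix $\Lambda$, $\lim_{k\to\infty}\|F^{\Lambda}_{\mathrm{nat}}(x^k)\|=0$.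
   Context: Problem: minimize $\psi=f+\varphi$ where $f:\mathbb{R}^n\to\mathbb{R}$ is continuously differentiable and $\varphi:\mathbb{R}^n\to\mathbb{R}$ is convex. Natural residual: $F^{\Lambda}_{\mathrm{nat}}(x)=x-\mathrm{prox}^{\Lambda}_{\varphi}(x-\Lambda^{-1}\nabla f(x))$ with $\mathrm{prox}^{\Lambda}_{\varphi}(z)=\arg\min_y\varphi(y)+\frac12(y-z)^T\Lambda(y-z)$. Notation: $\|\cdot\|$ Euclidean norm (Frobenius for matrices), $B_r(x)$ open ball, $\bar v=v/\|v\|$, $\psi'(x;d)$ directional derivative, $\partial\psi(x)=\nabla f(x)+\partial\varphi(x)$; $x$ is stationary if $0\in\partial\psi(x)$. Pseudo-gradient: $g(x)=u(x)d(x)$ where, for non-stationary $x$, $\|d(x)\|=1$, $\psi'(x;d(x))<0$, $u(x)\in[\psi'(x;d(x)),0)$, and for stationary $x$, $d(x)=0$, $u(x)=0$. Safeguards: for $\|d\|=1$, $\Gamma_{\max}(x,d)=\sup\{T>0: t\mapsto\psi(x+td)\text{ is } C^1\text{ on }(0,T)\}$, $\Gamma(x)=\inf_{\|d\|=1}\Gamma_{\max}(x,d)$; a stepsize safeguard $(x,d)\mapsto\Gamma(x,d)\in(0,\infty]$ is fixed. Truncation: $\psi$ can be truncated with data $\mathbb{R}^n=S_0\supset\cdots\supset S_m$, $\delta\in(0,\infty]$, $\kappa>0$, $T:\mathbb{R}^n\times(0,\delta]\to\mathbb{R}^n$ meaning (i) $\Gamma(x)\ge\delta$ on $S_m$; (ii)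 for $a\in(0,\delta]$, $x\in S_i\setminus S_{i+1}$, $i<m$: if $\Gamma(x)\ge a$ then $T(x,a)=x$, else $T(x,a)\in S_{i+1}$, $\Gamma(T(x,a))\ge a$, $\|T(x,a)-x\|\le\kappa a$. Put $S_{m+1}=\emptyset$. Algorithm: parameters $0<\eta<\eta_1<\eta_2<1$, $0<r_1<1<r_2$, $\Delta_{\max}>0$, $\gamma_1,\gamma_2>0$, a positive strictly decreasing summable sequence $(\epsilon_s)$ with $\epsilon_s\le\delta$, a nonincreasing $\ell:(0,\infty)\to[0,\frac12]$ with $\ell(\Delta)\to0$ as $\Delta\to0^+$; start $x^0$, $\Delta_0>0$, counters $c_0=\dots=c_m=0$. Iteration $k$: $g^k=g(x^k)$; stop if $g^k=0$. Choose $B^k\in\mathbb{R}^{n\times n}$, model $m_k(s)=\psi(x^k)+\langle g^k,s\rangle+\frac12\langle s,B^ks\rangle$, Cauchy point $s^k_C=-\alpha^C_kg^k$ with $\alpha^C_k\in\arg\min_{0\le t\le\Delta_k/\|g^k\|}m_k(-tg^k)$. Choose $s^k$, $\|s^k\|\le\Delta_k$, with $m_k(0)-m_k(s^k)\ge\frac{\gamma_1}{2}\|g^k\|\min\{\Delta_k,\gamma_2\|g^k\|\}$ and $m_k(0)-m_k(s^k)\ge(1-\ell(\|s^k\|))(m_k(0)-m_k(s^k_C))$. Let $\rho^1_k=\frac{\psi(x^k)-\psi(x^k+s^k)}{m_k(0)-m_k(s^k)}$. If $\rho^1_k\ge\eta_1$: $\tilde x^k=x^k+s^k$, $\Delta_{k+1}=\min\{\Delta_{\max},r_2\Delta_k\}$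 if $\rho^1_k>\eta_2$ and $\Delta_{k+1}=\Delta_k$ otherwise. Stepsize computation (performed for the analysis in every iteration, used by the algorithm when $\rho^1_k<\eta_1$): $\alpha_k=\min\{\Gamma(x^k,\bar s^k),\|s^k\|\}$; if $m_k(0)-m_k(\alpha_k\bar s^k)<\frac{\alpha_k}{2\|s^k\|}(m_k(0)-m_k(s^k))$, replace $s^k$ by $s^k_C$ and $\alpha_k=\min\{\Gamma(x^k,\bar s^k_C),\|s^k_C\|\}$; $\rho^2_k=\frac{\psi(x^k)-\psi(x^k+\alpha_k\bar s^k)}{m_k(0)-m_k(\alpha_k\bar s^k)}$. If $\rho^1_k<\eta_1$: $\Delta_{k+1}=r_1\Delta_k$ if $\rho^2_k<\eta_1$, $=\min\{\Delta_{\max},r_2\Delta_k\}$ if $\rho^2_k>\eta_2$, $=\Delta_k$ otherwise; $\tilde x^k=x^k+\alpha_k\bar s^k$ if $\rho^2_k\ge\eta$ and $\tilde x^k=x^k$ otherwise. Truncation step: set $\tilde x=\tilde x^k$ and repeat {find $i$ with $\tilde x\in S_i\setminus S_{i+1}$; if $\Gamma(\tilde x)<\epsilon_{c_i}$ set $\tilde x\leftarrow T(\tilde x,\epsilon_{c_i})$, $c_i\leftarrow c_i+1$; else stop}; $x^{k+1}=\tilde x$. Here $\alpha_k,\bar s^k$ denote the quantities of the stepsize computation. *)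

theory Defs
  imports "HOL-Analysis.Analysis" "HOL-Library.Landau_Symbols"
begin

definition dir_deriv :: "('a::real_normed_vector \<Rightarrow> real) \<Rightarrow> 'a \<Rightarrow> 'a \<Rightarrow> real" where
  "dir_deriv h x d = Lim (at_right 0) (\<lambda>t. (h (x + t *\<^sub>R d) - h x) / t)"

definition subdiff :: "('a::real_inner \<Rightarrow> real) \<Rightarrow> 'a \<Rightarrow> 'a set" where
  "subdiff phi x = {v. \<forall>y. phi y \<ge> phi x + v \<bullet> (y - x)}"

definition stationary :: "('a::real_inner \<Rightarrow> 'a) \<Rightarrow> ('a \<Rightarrow> real) \<Rightarrow> 'a \<Rightarrow> bool" where
  "stationary gradf phi x \<longleftrightarrow> (0::'a) \<in> (\<lambda>v. gradf x + v) ` subdiff phi x"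

definition C1_on :: "real set \<Rightarrow> (real \<Rightarrow> real) \<Rightarrow> bool" where
  "C1_on S h \<longleftrightarrow> (\<exists>h'. (\<forall>t\<in>S. (h has_real_derivative h' t) (at t)) \<and> continuous_on S h')"

definition Gamma_max :: "('a::real_normed_vector \<Rightarrow> real) \<Rightarrow> 'a \<Rightarrow> 'a \<Rightarrow> ereal" where
  "Gamma_max h x d = Sup {ereal T | T. T > 0 \<and> C1_on {0<..<T} (\<lambda>t. h (x + t *\<^sub>R d))}"

definition Gamma_min :: "('a::real_normed_vector \<Rightarrow> real) \<Rightarrow> 'a \<Rightarrow> ereal" where
  "Gamma_min h x = (INF d\<in>{d. norm d = 1}. Gamma_max h x d)"

definition lvl :: "(nat \<Rightarrow> 'a set) \<Rightarrow> nat \<Rightarrow> nat \<Rightarrow> 'a set" where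
  "lvl S m i = (if i \<le> m then S i else {})"

text \<open>The (terminating) truncation loop: trunc_loop G S m T eps c x c' x' means that,
  started from point x with counters c, the loop stops with point x' and counters c'.\<close>
inductive trunc_loop :: "('a \<Rightarrow> ereal) \<Rightarrow> (nat \<Rightarrow> 'a set) \<Rightarrow> nat \<Rightarrow> ('a \<Rightarrow> real \<Rightarrow> 'a)
    \<Rightarrow> (nat \<Rightarrow> real) \<Rightarrow> (nat \<Rightarrow> nat) \<Rightarrow> 'a \<Rightarrow> (nat \<Rightarrow> nat) \<Rightarrow> 'a \<Rightarrow> bool"
  for G S m T eps where
  stop: "x \<in> lvl S m i - lvl S m (Suc i) \<Longrightarrow> G x \<ge> ereal (eps (c i))
          \<Longrightarrow> trunc_loop G S m T eps c x c x"
| step: "x \<in> lvl S m i - lvl S m (Suc i) \<Longrightarrow> G x < ereal (eps (c i))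
          \<Longrightarrow> trunc_loop G S m T eps (c(i := Suc (c i))) (T x (eps (c i))) c' x'
          \<Longrightarrow> trunc_loop G S m T eps c x c' x'"

definition tr_model :: "real \<Rightarrow> real^'n \<Rightarrow> real^'n^'n \<Rightarrow> real^'n \<Rightarrow> real" where
  "tr_model p g B s = p + g \<bullet> s + (1/2) * (s \<bullet> (B *v s))"

definition safe_step :: "('a::real_normed_vector \<Rightarrow> 'a \<Rightarrow> ereal) \<Rightarrow> 'a \<Rightarrow> 'a \<Rightarrow> real" where
  "safe_step Gs x v = real_of_ereal (min (Gs x (sgn v)) (ereal (norm v)))"

definition sym_posdef :: "real^'n^'n \<Rightarrow> bool" where
  "sym_posdef L \<longleftrightarrow> transpose L = L \<and> (\<forall>v. v \<noteq> 0 \<longrightarrow> v \<bullet> (L *v v) > 0)"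

definition prox :: "real^'n^'n \<Rightarrow> (real^'n \<Rightarrow> real) \<Rightarrow> real^'n \<Rightarrow> real^'n" where
  "prox L phi z = (THE y. \<forall>w. phi y + (1/2) * ((y - z) \<bullet> (L *v (y - z)))
                            \<le> phi w + (1/2) * ((w - z) \<bullet> (L *v (w - z))))"

definition Fnat :: "real^'n^'n \<Rightarrow> (real^'n \<Rightarrow> real^'n) \<Rightarrow> (real^'n \<Rightarrow> real) \<Rightarrow> real^'n \<Rightarrow> real^'n" where
  "Fnat L gradf phi x = x - prox L phi (x - matrix_inv L *v gradf x)"

end

theory Submission
  imports Defs
begin

(* Accepted steps decrease psi by a fixed fraction of the model decrease, while a truncation at
   level i with counter c_i moves the iterate by at most kappa eps(c_i). Since eps is summable and
   psi is Lipschitz on the bounded region visited, the decreases psi(x^k) - psi(x~^k) are summable.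

   Suppose a subsequence converges to a non-stationary point x*. Near x* the pseudo-gradient is
   bounded away from zero, so every step is bounded by a multiple of the decrease it produces, and
   the whole sequence converges to x*. Condition (B.3) then keeps the trust-region radius bounded
   away from zero, so infinitely many iterations are accepted; the counters can only grow on the
   levels above the highest unbounded one, so infinitely many accepted iterations start where
   Gamma >= eps_N. By (B.4) their steps, hence their decreases, are bounded below, contradicting
   summability. Thus every cluster point is stationary, and since F_nat is continuous and vanishes
   at stationary points, ||F_nat(x^k)|| -> 0 along the bounded sequence. *)

section \<open>Matrices and quadratic forms\<close>

lemma matrix_vector_mult_nth_inner: "(A *v x) $ i = A $ i \<bullet> x"
  by (simp add: matrix_vector_mult_def inner_vec_def)

lemma matrix_vector_mult_uminus: "(A :: real^'n^'m) *v (- v) = - (A *v v)"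
  by (simp add: vec_eq_iff matrix_vector_mult_def sum_negf)

lemma norm_matrix_vector_mult_le:
  fixes A :: "real^'n^'m"
  shows "norm (A *v x) \<le> norm A * norm x"
proof -
  have "norm (A *v x) = L2_set (\<lambda>i. \<bar>A $ i \<bullet> x\<bar>) UNIV"
    by (simp add: norm_vec_def matrix_vector_mult_nth_inner)
  also have "\<dots> \<le> L2_set (\<lambda>i. norm (A $ i) * norm x) UNIV"
    by (intro L2_set_mono Cauchy_Schwarz_ineq2) simp
  also have "\<dots> = L2_set (\<lambda>i. norm (A $ i)) UNIV * norm x"
    by (rule L2_set_left_distrib[symmetric]) simp
  also have "\<dots> = norm A * norm x"
    by (simp only: norm_vec_def[of A])
  finally show ?thesis .
qed

lemma quadratic_form_abs_le:
  fixes A :: "real^'n^'n"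
  shows "\<bar>x \<bullet> (A *v x)\<bar> \<le> norm A * (norm x)\<^sup>2"
proof -
  have "\<bar>x \<bullet> (A *v x)\<bar> \<le> norm x * norm (A *v x)" by (rule Cauchy_Schwarz_ineq2)
  also have "\<dots> \<le> norm x * (norm A * norm x)"
    by (intro mult_left_mono norm_matrix_vector_mult_le) simp
  finally show ?thesis by (simp add: power2_eq_square mult_ac)
qed

lemma symmetric_matrix_inner_swap:
  fixes L :: "real^'n^'n"
  assumes "transpose L = L"
  shows "h \<bullet> (L *v k) = k \<bullet> (L *v h)"
proof -
  have "h \<bullet> (L *v k) = (transpose L *v h) \<bullet> k" by (simp add: dot_lmul_matrix)
  then show ?thesis using assms by (simp add: inner_commute)
qed

lemma symmetric_quadratic_form_add:
  fixes L :: "real^'n^'n"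
  assumes "transpose L = L"
  shows "(a + t *\<^sub>R h) \<bullet> (L *v (a + t *\<^sub>R h))
    = a \<bullet> (L *v a) + 2 * t * (h \<bullet> (L *v a)) + t\<^sup>2 * (h \<bullet> (L *v h))"
  using symmetric_matrix_inner_swap[OF assms, of a h]
  by (simp add: matrix_vector_right_distrib matrix_vector_mult_scaleR inner_add_left
      inner_add_right algebra_simps power2_eq_square)

lemma sym_posdef_quadratic_nonneg: "sym_posdef L \<Longrightarrow> 0 \<le> v \<bullet> (L *v v)"
  by (cases "v = 0") (auto simp: sym_posdef_def intro: less_imp_le)

lemma sym_posdef_coercive:
  fixes L :: "real^'n^'n"
  assumes "sym_posdef L"
  obtains c where "c > 0" "\<And>v. c * (norm v)\<^sup>2 \<le> v \<bullet> (L *v v)"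
proof -
  have "continuous_on (sphere 0 1) (\<lambda>v::real^'n. v \<bullet> (L *v v))"
    by (intro continuous_intros)
  moreover have "compact (sphere (0::real^'n) 1)" "sphere (0::real^'n) 1 \<noteq> {}" by simp_all
  ultimately obtain u where u: "u \<in> sphere 0 1"
    and min: "\<forall>w\<in>sphere 0 1. u \<bullet> (L *v u) \<le> w \<bullet> (L *v w)"
    using continuous_attains_inf by blast
  have "u \<noteq> 0" using u by auto
  then have pos: "u \<bullet> (L *v u) > 0"
    using assms by (simp add: sym_posdef_def)
  have "u \<bullet> (L *v u) * (norm v)\<^sup>2 \<le> v \<bullet> (L *v v)" for v
  proof (cases "v = 0")
    case False
    define w where "w = (1 / norm v) *\<^sub>R v"
    have "v = norm v *\<^sub>R w" using False by (simp add: w_def)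
    then have "v \<bullet> (L *v v) = (norm v)\<^sup>2 * (w \<bullet> (L *v w))"
      by (metis inner_scaleR_left inner_scaleR_right matrix_vector_mult_scaleR mult.assoc power2_eq_square)
    moreover have "w \<in> sphere 0 1" using False by (simp add: w_def)
    then have "u \<bullet> (L *v u) \<le> w \<bullet> (L *v w)" using min by blast
    ultimately show ?thesis
      using mult_right_mono[of "u \<bullet> (L *v u)" "w \<bullet> (L *v w)" "(norm v)\<^sup>2"] by (simp add: mult.commute)
  qed simp
  with pos that show ?thesis by blast
qed

lemma sym_posdef_matrix_inv:
  fixes L :: "real^'n^'n"
  assumes "sym_posdef L"
  shows "L ** matrix_inv L = mat 1"
proof -
  have "inj ((*v) L)"
  proof (rule injI)
    fix a b assume "L *v a = L *v b"
    then have "(a - b) \<bullet> (L *v (a - b)) = 0" by (simp add: matrix_vector_mult_diff_distrib)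
    then show "a = b" using assms unfolding sym_posdef_def by (metis less_irrefl right_minus_eq)
  qed
  then have "invertible L"
    using matrix_left_invertible_injective invertible_left_inverse by blast
  then have "\<exists>A'. L ** A' = mat 1 \<and> A' ** L = mat 1" by (simp add: invertible_def)
  then show ?thesis unfolding matrix_inv_def by (rule someI_ex[THEN conjunct1])
qed

section \<open>Convex functions\<close>

lemma convex_on_diff_le_dist:
  fixes \<phi> :: "'a::real_normed_vector \<Rightarrow> real"
  assumes cv: "convex_on UNIV \<phi>" and M: "\<And>y. y \<in> cball 0 (R + 1) \<Longrightarrow> \<bar>\<phi> y\<bar> \<le> M"
    and y: "y \<in> cball 0 R" and z: "z \<in> cball 0 R"
  shows "\<phi> z - \<phi> y \<le> 2 * M * dist z y"
proof (cases "y = z")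
  case False
  \<comment> \<open>Extend the segment from y through z by length one; the endpoint w stays in the larger ball.\<close>
  define n where "n = dist z y"
  have n: "n > 0" using False by (simp add: n_def)
  define w where "w = z + (1 / n) *\<^sub>R (z - y)"
  define l where "l = n / (n + 1)"
  have l: "0 \<le> l" "l \<le> 1" "l \<le> n" using n by (auto simp: l_def field_simps)
  have "norm w \<le> norm z + norm ((1 / n) *\<^sub>R (z - y))" unfolding w_def by (rule norm_triangle_ineq)
  also have "norm ((1 / n) *\<^sub>R (z - y)) = 1" using n by (simp add: n_def dist_norm)
  finally have w: "w \<in> cball 0 (R + 1)" using z by auto
  have "(1 - l) *\<^sub>R y + l *\<^sub>R w = y + (l * (1 + 1 / n)) *\<^sub>R (z - y)"
    by (simp add: w_def algebra_simps)
  also have "l * (1 + 1 / n) = 1" using n by (simp add: l_def divide_simps)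
  finally have "\<phi> z \<le> (1 - l) * \<phi> y + l * \<phi> w"
    using convex_onD[OF cv l(1,2), of y w] by simp
  then have "\<phi> z - \<phi> y \<le> l * (\<phi> w - \<phi> y)" by (simp add: algebra_simps)
  also have "\<dots> \<le> l * (2 * M)"
    using M[OF w] M[of y] y l by (intro mult_left_mono) (auto simp: abs_le_iff)
  also have "\<dots> \<le> n * (2 * M)"
    using M[of y] y l by (intro mult_right_mono) (auto simp: abs_le_iff)
  finally show ?thesis by (simp add: n_def mult_ac)
qed simp

lemma convex_on_lipschitz_on_cball:
  fixes \<phi> :: "'a::euclidean_space \<Rightarrow> real"
  assumes cv: "convex_on UNIV \<phi>"
  obtains L where "L-lipschitz_on (cball 0 R) \<phi>"
proof -
  have "continuous_on (cball 0 (R + 1)) \<phi>"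
    using convex_on_continuous[OF open_UNIV cv] by (rule continuous_on_subset) simp
  then have "bounded (\<phi> ` cball 0 (R + 1))"
    by (intro compact_imp_bounded compact_continuous_image) simp_all
  then obtain M where "\<forall>y\<in>cball 0 (R + 1). \<bar>\<phi> y\<bar> \<le> M"
    by (auto simp: bounded_iff)
  then have M: "\<bar>\<phi> y\<bar> \<le> M" if "y \<in> cball 0 (R + 1)" for y
    using that by blast
  have "(2 * max M 0)-lipschitz_on (cball 0 R) \<phi>"
  proof (rule lipschitz_onI)
    fix y z :: 'a assume y: "y \<in> cball 0 R" and z: "z \<in> cball 0 R"
    have "\<phi> z - \<phi> y \<le> 2 * M * dist y z"
      using convex_on_diff_le_dist[OF cv M y z] by (simp add: dist_commute)
    moreover have "\<phi> y - \<phi> z \<le> 2 * M * dist y z" using convex_on_diff_le_dist[OF cv M z y] .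
    moreover have "2 * M * dist y z \<le> 2 * max M 0 * dist y z" by (intro mult_right_mono) auto
    ultimately show "dist (\<phi> y) (\<phi> z) \<le> 2 * max M 0 * dist y z" by (simp add: dist_real_def)
  qed simp
  then show ?thesis by (rule that)
qed

lemma convex_on_ge_affine:
  fixes \<phi> :: "'a::euclidean_space \<Rightarrow> real"
  assumes cv: "convex_on UNIV \<phi>"
  obtains K where "K \<ge> 0" "\<And>y. \<phi> 0 - K * norm y \<le> \<phi> y"
proof -
  obtain K where K: "K-lipschitz_on (cball 0 1) \<phi>"
    using convex_on_lipschitz_on_cball[OF cv] .
  have "\<phi> 0 - K * norm y \<le> \<phi> y" for y
  proof (cases "norm y \<le> 1")
    case True
    then show ?thesis using lipschitz_onD[OF K, of 0 y] by (simp add: dist_real_def)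
  next
    case False
    define n where "n = norm y"
    have n: "n > 1" using False by (simp add: n_def)
    define u where "u = (1 / n) *\<^sub>R y"
    have "y \<noteq> 0" using n by (auto simp: n_def)
    then have u: "norm u = 1" by (simp add: u_def n_def)
    have "(1 - 1 / n) *\<^sub>R 0 + (1 / n) *\<^sub>R y = u" by (simp add: u_def)
    then have "\<phi> u \<le> (1 - 1 / n) * \<phi> 0 + (1 / n) * \<phi> y"
      using convex_onD[OF cv, of "1 / n" 0 y] n by simp
    moreover have "\<phi> 0 - K \<le> \<phi> u" using lipschitz_onD[OF K, of 0 u] u by (simp add: dist_real_def)
    ultimately have "n * (\<phi> 0 - K) \<le> n * ((1 - 1 / n) * \<phi> 0 + (1 / n) * \<phi> y)"
      using n by (intro mult_left_mono) auto
    then have "n * (\<phi> 0 - K) \<le> (n - 1) * \<phi> 0 + \<phi> y" using n by (simp add: algebra_simps)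
    then show ?thesis by (simp add: n_def algebra_simps)
  qed
  with lipschitz_on_nonneg[OF K] that show ?thesis by blast
qed

lemma tendsto_Inf_at_right_0:
  fixes Q :: "real \<Rightarrow> real"
  assumes mono: "\<And>s t. 0 < s \<Longrightarrow> s < t \<Longrightarrow> Q s \<le> Q t" and low: "\<And>t. 0 < t \<Longrightarrow> b \<le> Q t"
  shows "(Q \<longlongrightarrow> Inf (Q ` {0<..})) (at_right 0)"
proof (rule tendstoI)
  fix e :: real assume "e > 0"
  then obtain t0 where t0: "0 < t0" "Q t0 < Inf (Q ` {0<..}) + e"
    using cInf_lessD[of "Q ` {0<..}" "Inf (Q ` {0<..}) + e"] by auto
  have bdd: "bdd_below (Q ` {0<..})" using low by (auto intro!: bdd_belowI)
  show "\<forall>\<^sub>F t in at_right 0. dist (Q t) (Inf (Q ` {0<..})) < e"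
    using eventually_at_right_real[OF t0(1)]
  proof eventually_elim
    case (elim t)
    then have "Inf (Q ` {0<..}) \<le> Q t" "Q t \<le> Q t0"
      using bdd mono[of t t0] by (auto intro!: cInf_lower)
    then show ?case using t0 by (simp add: dist_real_def)
  qed
qed

lemma convex_on_dir_quotient_tendsto:
  fixes \<phi> :: "'a::real_normed_vector \<Rightarrow> real"
  assumes cv: "convex_on UNIV \<phi>"
  obtains D where "((\<lambda>t. (\<phi> (x + t *\<^sub>R v) - \<phi> x) / t) \<longlongrightarrow> D) (at_right 0)"
proof -
  define h where "h t = \<phi> (x + t *\<^sub>R v)" for t
  have h: "convex_on UNIV h"
  proof
    fix t a b :: real assume t: "0 < t" "t < 1"
    have "x + ((1 - t) *\<^sub>R a + t *\<^sub>R b) *\<^sub>R v = (1 - t) *\<^sub>R (x + a *\<^sub>R v) + t *\<^sub>R (x + b *\<^sub>R v)"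
      by (simp add: algebra_simps)
    then show "h ((1 - t) *\<^sub>R a + t *\<^sub>R b) \<le> (1 - t) * h a + t * h b"
      using convex_onD[OF cv, of t] t by (simp add: h_def)
  qed simp
  define Q where "Q t = (h t - h 0) / t" for t
  have Q_eq: "(h 0 - h r) / (0 - r) = Q r" for r
    unfolding Q_def by (metis minus_diff_eq minus_divide_divide diff_0)
  have mono: "Q s \<le> Q t" if "0 < s" "s < t" for s t
    using convex_on_slope_le(1)[OF h _ _ that] by (simp only: Q_eq UNIV_I)
  have low: "h 0 - h (-1) \<le> Q t" if "0 < t" for t
  proof -
    have "(-1::real) < 0" by simp
    from convex_on_slope_le[OF h _ _ this that] show ?thesis by (simp only: Q_eq UNIV_I) simp
  qed
  have "(Q \<longlongrightarrow> Inf (Q ` {0<..})) (at_right 0)" using mono low by (rule tendsto_Inf_at_right_0)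
  then have "((\<lambda>t. (\<phi> (x + t *\<^sub>R v) - \<phi> x) / t) \<longlongrightarrow> Inf (Q ` {0<..})) (at_right 0)"
    unfolding Q_def h_def by simp
  then show ?thesis by (rule that)
qed

section \<open>The proximal map and the natural residual\<close>

definition prox_objective :: "real^'n^'n \<Rightarrow> (real^'n \<Rightarrow> real) \<Rightarrow> real^'n \<Rightarrow> real^'n \<Rightarrow> real" where
  "prox_objective L \<phi> z y = \<phi> y + 1/2 * ((y - z) \<bullet> (L *v (y - z)))"

lemma prox_objective_has_minimizer:
  fixes L :: "real^'n^'n"
  assumes L: "sym_posdef L" and cv: "convex_on UNIV \<phi>"
  obtains p where "\<And>w. prox_objective L \<phi> z p \<le> prox_objective L \<phi> z w"
proof -
  obtain c where c: "c > 0" "\<And>v. c * (norm v)\<^sup>2 \<le> v \<bullet> (L *v v)"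
    using sym_posdef_coercive[OF L] by blast
  obtain K where K: "K \<ge> 0" "\<And>y. \<phi> 0 - K * norm y \<le> \<phi> y"
    using convex_on_ge_affine[OF cv] by blast
  define C where "C = \<phi> z - \<phi> 0 + K * norm z"
  have C: "0 \<le> C" using K(2)[of z] by (simp add: C_def)
  define \<rho> where "\<rho> = max 1 (2 * (K + C + 1) / c)"
  have far: "prox_objective L \<phi> z z < prox_objective L \<phi> z w" if "\<rho> < dist z w" for w
  proof -
    define r where "r = dist z w"
    have r: "1 < r" "2 * (K + C + 1) / c < r" using that by (auto simp: r_def \<rho>_def)
    then have gap: "C + 1 < c * r / 2 - K" using c by (simp add: field_simps)
    then have "c * r / 2 - K \<le> r * (c * r / 2 - K)" using C r(1) by (simp add: mult_le_cancel_right1)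
    with gap have "C < c / 2 * r\<^sup>2 - K * r" by (simp add: power2_eq_square algebra_simps)
    moreover have "norm w \<le> norm z + r" using norm_triangle_sub[of w z] by (simp add: r_def dist_norm norm_minus_commute)
    then have "\<phi> 0 - K * norm z - K * r \<le> \<phi> w"
      using K by (smt (verit) mult_left_mono distrib_left)
    moreover have "c * r\<^sup>2 \<le> (w - z) \<bullet> (L *v (w - z))"
      using c(2)[of "w - z"] by (simp add: r_def dist_norm norm_minus_commute)
    ultimately show ?thesis by (simp add: prox_objective_def C_def)
  qed
  have "continuous_on (cball z \<rho>) (prox_objective L \<phi> z)"
    unfolding prox_objective_def matrix_vector_mult_diff_distrib
    by (intro continuous_intros continuous_on_subset[OF convex_on_continuous[OF open_UNIV cv]]) auto
  moreover have "compact (cball z \<rho>)" "cball z \<rho> \<noteq> {}" using C by (auto simp: \<rho>_def)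
  ultimately obtain p where p: "\<forall>y\<in>cball z \<rho>. prox_objective L \<phi> z p \<le> prox_objective L \<phi> z y"
    using continuous_attains_inf by blast
  have "prox_objective L \<phi> z p \<le> prox_objective L \<phi> z w" for w
  proof (cases "w \<in> cball z \<rho>")
    case False
    then have "prox_objective L \<phi> z z < prox_objective L \<phi> z w" by (intro far) simp
    moreover have "z \<in> cball z \<rho>" using C by (simp add: \<rho>_def)
    ultimately show ?thesis using p by fastforce
  qed (use p in blast)
  then show ?thesis by (rule that)
qed

lemma nonneg_if_nonneg_add_small_mult:
  fixes a c :: real
  assumes "\<And>t. 0 < t \<Longrightarrow> t < 1 \<Longrightarrow> 0 \<le> a + t * c"
  shows "0 \<le> a"
proof (rule tendsto_lowerbound)
  show "((\<lambda>t. a + t * c) \<longlongrightarrow> a) (at_right 0)"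
    by (auto intro!: tendsto_eq_intros)
  show "\<forall>\<^sub>F t in at_right 0. 0 \<le> a + t * c"
    using eventually_at_right_real[OF zero_less_one] by eventually_elim (use assms in auto)
qed simp

lemma prox_objective_minimizer_optimality:
  fixes L :: "real^'n^'n"
  assumes L: "sym_posdef L" and cv: "convex_on UNIV \<phi>"
    and p: "\<And>w. prox_objective L \<phi> z p \<le> prox_objective L \<phi> z w"
  shows "0 \<le> \<phi> w - \<phi> p + (w - p) \<bullet> (L *v (p - z))"
proof (rule nonneg_if_nonneg_add_small_mult)
  fix t :: real assume t: "0 < t" "t < 1"
  define h where "h = w - p"
  have sym: "transpose L = L" using L by (simp add: sym_posdef_def)
  define a b q where "a = (p - z) \<bullet> (L *v (p - z))" and "b = h \<bullet> (L *v (p - z))"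
    and "q = h \<bullet> (L *v h)"
  have "p + t *\<^sub>R h - z = (p - z) + t *\<^sub>R h" by simp
  then have "prox_objective L \<phi> z (p + t *\<^sub>R h) = \<phi> (p + t *\<^sub>R h) + 1/2 * (a + 2 * t * b + t\<^sup>2 * q)"
    unfolding prox_objective_def a_def b_def q_def by (simp only: symmetric_quadratic_form_add[OF sym])
  moreover have "prox_objective L \<phi> z p = \<phi> p + 1/2 * a" by (simp add: prox_objective_def a_def)
  moreover have "\<phi> (p + t *\<^sub>R h) \<le> (1 - t) * \<phi> p + t * \<phi> w"
    using convex_onD[OF cv, of t p w] t by (simp add: h_def algebra_simps)
  ultimately have "0 \<le> t * ((\<phi> w - \<phi> p + b) + t * (q / 2))"
    using p[of "p + t *\<^sub>R h"] by (simp add: power2_eq_square algebra_simps)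
  then show "0 \<le> \<phi> w - \<phi> p + (w - p) \<bullet> (L *v (p - z)) + t * (q / 2)"
    using t by (simp add: h_def b_def zero_le_mult_iff)
qed

lemma prox_objective_minimizer_lipschitz:
  fixes L :: "real^'n^'n"
  assumes L: "sym_posdef L" and cv: "convex_on UNIV \<phi>"
    and c: "c > 0" "\<And>v. c * (norm v)\<^sup>2 \<le> v \<bullet> (L *v v)"
    and p1: "\<And>w. prox_objective L \<phi> z1 p1 \<le> prox_objective L \<phi> z1 w"
    and p2: "\<And>w. prox_objective L \<phi> z2 p2 \<le> prox_objective L \<phi> z2 w"
  shows "norm (p1 - p2) \<le> norm L / c * norm (z1 - z2)"
proof -
  define h where "h = p2 - p1"
  have "p1 - p2 = - h" by (simp add: h_def)
  then have "0 \<le> h \<bullet> (L *v (p1 - z1)) - h \<bullet> (L *v (p2 - z2))"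
    using prox_objective_minimizer_optimality[OF L cv p1, of p2]
      prox_objective_minimizer_optimality[OF L cv p2, of p1]
    unfolding h_def[symmetric] by (simp add: inner_minus_left)
  also have "\<dots> = h \<bullet> (L *v ((p1 - z1) - (p2 - z2)))"
    by (simp only: matrix_vector_mult_diff_distrib inner_diff_right)
  also have "(p1 - z1) - (p2 - z2) = (z2 - z1) - h" by (simp add: h_def)
  also have "h \<bullet> (L *v ((z2 - z1) - h)) = h \<bullet> (L *v (z2 - z1)) - h \<bullet> (L *v h)"
    by (simp only: matrix_vector_mult_diff_distrib inner_diff_right)
  finally have "c * (norm h)\<^sup>2 \<le> h \<bullet> (L *v (z2 - z1))" using c(2)[of h] by linarith
  also have "\<dots> \<le> norm h * norm (L *v (z2 - z1))"
    by (rule order_trans[OF abs_ge_self Cauchy_Schwarz_ineq2])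
  also have "\<dots> \<le> norm h * (norm L * norm (z2 - z1))"
    by (intro mult_left_mono norm_matrix_vector_mult_le) simp
  finally have "norm h * (c * norm h) \<le> norm h * (norm L * norm (z2 - z1))"
    by (simp add: power2_eq_square ac_simps)
  then have "c * norm h \<le> norm L * norm (z2 - z1)"
    by (cases "h = 0") auto
  then show ?thesis
    using c(1) by (simp add: h_def pos_le_divide_eq norm_minus_commute mult.commute)
qed

lemma prox_eqI:
  fixes L :: "real^'n^'n"
  assumes L: "sym_posdef L" and cv: "convex_on UNIV \<phi>"
    and p: "\<And>w. prox_objective L \<phi> z p \<le> prox_objective L \<phi> z w"
  shows "prox L \<phi> z = p"
proof -
  obtain c where c: "c > 0" "\<And>v. c * (norm v)\<^sup>2 \<le> v \<bullet> (L *v v)"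
    using sym_posdef_coercive[OF L] by blast
  have "(THE y. \<forall>w. prox_objective L \<phi> z y \<le> prox_objective L \<phi> z w) = p"
  proof (rule the_equality)
    fix y assume "\<forall>w. prox_objective L \<phi> z y \<le> prox_objective L \<phi> z w"
    then have "norm (y - p) \<le> norm L / c * norm (z - z)"
      by (intro prox_objective_minimizer_lipschitz[OF L cv c _ p]) blast
    then show "y = p" by simp
  qed (use p in blast)
  then show ?thesis by (simp add: prox_def prox_objective_def)
qed

lemma lipschitz_on_prox:
  fixes L :: "real^'n^'n"
  assumes L: "sym_posdef L" and cv: "convex_on UNIV \<phi>"
  obtains C where "C-lipschitz_on UNIV (prox L \<phi>)"
proof -
  obtain c where c: "c > 0" "\<And>v. c * (norm v)\<^sup>2 \<le> v \<bullet> (L *v v)"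
    using sym_posdef_coercive[OF L] by blast
  have "(norm L / c)-lipschitz_on UNIV (prox L \<phi>)"
  proof (rule lipschitz_onI)
    fix z1 z2 :: "real^'n"
    obtain p1 where p1: "\<And>w. prox_objective L \<phi> z1 p1 \<le> prox_objective L \<phi> z1 w"
      using prox_objective_has_minimizer[OF L cv, where z = z1] by blast
    obtain p2 where p2: "\<And>w. prox_objective L \<phi> z2 p2 \<le> prox_objective L \<phi> z2 w"
      using prox_objective_has_minimizer[OF L cv, where z = z2] by blast
    show "dist (prox L \<phi> z1) (prox L \<phi> z2) \<le> norm L / c * dist z1 z2"
      using prox_objective_minimizer_lipschitz[OF L cv c p1 p2]
      by (simp add: prox_eqI[OF L cv p1] prox_eqI[OF L cv p2] dist_norm)
  qed (use c in simp)
  then show ?thesis by (rule that)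
qed

lemma continuous_on_Fnat:
  fixes L :: "real^'n^'n"
  assumes L: "sym_posdef L" and cv: "convex_on UNIV \<phi>" and gc: "continuous_on UNIV gradf"
  shows "continuous_on UNIV (Fnat L gradf \<phi>)"
proof -
  obtain C where "C-lipschitz_on UNIV (prox L \<phi>)" using lipschitz_on_prox[OF L cv] .
  then have prox: "continuous_on UNIV (prox L \<phi>)" by (rule lipschitz_on_continuous_on)
  have "continuous_on UNIV (\<lambda>x. matrix_inv L *v gradf x)"
    using continuous_on_compose[OF gc matrix_vector_mult_linear_continuous_on] by (simp add: o_def)
  then show ?thesis
    unfolding Fnat_def by (intro continuous_intros continuous_on_compose2[OF prox]) auto
qed

lemma Fnat_eq_0_if_stationary:
  fixes L :: "real^'n^'n"
  assumes L: "sym_posdef L" and cv: "convex_on UNIV \<phi>" and st: "stationary gradf \<phi> x"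
  shows "Fnat L gradf \<phi> x = 0"
proof -
  obtain v where v: "v \<in> subdiff \<phi> x" "gradf x + v = 0" using st by (auto simp: stationary_def)
  have sym: "transpose L = L" using L by (simp add: sym_posdef_def)
  define z where "z = x - matrix_inv L *v gradf x"
  have Lz: "L *v (x - z) = gradf x"
    using sym_posdef_matrix_inv[OF L] by (simp add: z_def matrix_vector_mul_assoc)
  \<comment> \<open>The subgradient inequality for v = - gradf x makes x a minimizer of the prox objective.\<close>
  have "prox_objective L \<phi> z x \<le> prox_objective L \<phi> z w" for w
  proof -
    have "(w - z) \<bullet> (L *v (w - z))
        = (x - z) \<bullet> (L *v (x - z)) + 2 * ((w - x) \<bullet> gradf x) + (w - x) \<bullet> (L *v (w - x))"
      using symmetric_quadratic_form_add[OF sym, of "x - z" 1 "w - x"] by (simp add: Lz)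
    moreover have "\<phi> x + v \<bullet> (w - x) \<le> \<phi> w" using v(1) by (simp add: subdiff_def)
    moreover have "v \<bullet> (w - x) + (w - x) \<bullet> gradf x = 0"
      using v(2) by (metis add.commute inner_commute inner_left_distrib inner_zero_left)
    ultimately show ?thesis
      using sym_posdef_quadratic_nonneg[OF L, of "w - x"] unfolding prox_objective_def by linarith
  qed
  then have "prox L \<phi> z = x" by (rule prox_eqI[OF L cv])
  then show ?thesis by (simp add: Fnat_def z_def)
qed

section \<open>One-sided directional derivatives\<close>

lemma dir_quotient_tendsto_inner:
  fixes f :: "'a::real_inner \<Rightarrow> real"
  assumes "(f has_derivative (\<lambda>h. gx \<bullet> h)) (at x)"
  shows "((\<lambda>t. (f (x + t *\<^sub>R v) - f x) / t) \<longlongrightarrow> gx \<bullet> v) (at_right 0)"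
proof -
  have "((\<lambda>t. x + t *\<^sub>R v) has_derivative (\<lambda>t. t *\<^sub>R v)) (at 0)"
    by (auto intro!: derivative_eq_intros)
  moreover have "(f has_derivative (\<lambda>h. gx \<bullet> h)) (at (x + 0 *\<^sub>R v))" using assms by simp
  ultimately have "((\<lambda>t. f (x + t *\<^sub>R v)) has_derivative (\<lambda>t. gx \<bullet> (t *\<^sub>R v))) (at 0)"
    by (rule has_derivative_compose[unfolded o_def])
  moreover have "(\<lambda>t. gx \<bullet> (t *\<^sub>R v)) = (*) (gx \<bullet> v)" by (auto simp: mult.commute)
  ultimately have "((\<lambda>t. f (x + t *\<^sub>R v)) has_field_derivative gx \<bullet> v) (at 0)"
    by (simp add: has_field_derivative_def)
  then have "((\<lambda>t. (f (x + t *\<^sub>R v) - f x) / t) \<longlongrightarrow> gx \<bullet> v) (at 0)"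
    by (simp add: DERIV_def)
  then show ?thesis by (rule tendsto_mono[OF at_le, rotated]) simp
qed

lemma dir_deriv_eqI:
  assumes "((\<lambda>t. (h (x + t *\<^sub>R v) - h x) / t) \<longlongrightarrow> D) (at_right 0)"
  shows "dir_deriv h x v = D"
  unfolding dir_deriv_def using assms by (intro tendsto_Lim) simp_all

lemma dir_quotient_tendsto_add_convex:
  fixes f \<phi> :: "'a::real_inner \<Rightarrow> real"
  assumes "(f has_derivative (\<lambda>h. gx \<bullet> h)) (at x)" and "convex_on UNIV \<phi>"
  defines "\<psi> \<equiv> \<lambda>y. f y + \<phi> y"
  shows "((\<lambda>t. (\<psi> (x + t *\<^sub>R v) - \<psi> x) / t) \<longlongrightarrow> dir_deriv \<psi> x v) (at_right 0)"
proof -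
  obtain D where "((\<lambda>t. (\<phi> (x + t *\<^sub>R v) - \<phi> x) / t) \<longlongrightarrow> D) (at_right 0)"
    using convex_on_dir_quotient_tendsto[OF assms(2)] .
  from tendsto_add[OF dir_quotient_tendsto_inner[OF assms(1)] this]
  have "((\<lambda>t. (\<psi> (x + t *\<^sub>R v) - \<psi> x) / t) \<longlongrightarrow> gx \<bullet> v + D) (at_right 0)"
    by (simp add: \<psi>_def add_divide_distrib[symmetric] algebra_simps)
  with dir_deriv_eqI[OF this] show ?thesis by simp
qed

lemma dir_deriv_lipschitz:
  assumes tv: "((\<lambda>t. (h (x + t *\<^sub>R v) - h x) / t) \<longlongrightarrow> dir_deriv h x v) (at_right 0)"
    and tw: "((\<lambda>t. (h (x + t *\<^sub>R w) - h x) / t) \<longlongrightarrow> dir_deriv h x w) (at_right 0)"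
    and lip: "L-lipschitz_on (ball x r) h" and r: "r > 0"
    and v: "norm v \<le> 1" and w: "norm w \<le> 1"
  shows "\<bar>dir_deriv h x v - dir_deriv h x w\<bar> \<le> L * norm (v - w)"
proof (rule tendsto_upperbound)
  show "((\<lambda>t. \<bar>(h (x + t *\<^sub>R v) - h x) / t - (h (x + t *\<^sub>R w) - h x) / t\<bar>)
      \<longlongrightarrow> \<bar>dir_deriv h x v - dir_deriv h x w\<bar>) (at_right 0)"
    by (intro tendsto_rabs tendsto_diff tv tw)
  show "\<forall>\<^sub>F t in at_right 0. \<bar>(h (x + t *\<^sub>R v) - h x) / t - (h (x + t *\<^sub>R w) - h x) / t\<bar> \<le> L * norm (v - w)"
    using eventually_at_right_real[OF r]
  proof eventually_elim
    case (elim t)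
    then have t: "0 < t" "t < r" by auto
    have "norm (t *\<^sub>R v) = t * norm v" "norm (t *\<^sub>R w) = t * norm w" using t by simp_all
    moreover have "t * norm v \<le> t" "t * norm w \<le> t" using t v w by (simp_all add: mult_left_le)
    ultimately have "norm (t *\<^sub>R v) < r" "norm (t *\<^sub>R w) < r" using t by linarith+
    then have "\<bar>h (x + t *\<^sub>R v) - h (x + t *\<^sub>R w)\<bar> \<le> L * (t * norm (v - w))"
      using lipschitz_onD[OF lip, of "x + t *\<^sub>R v" "x + t *\<^sub>R w"] t
      by (simp add: dist_norm scaleR_diff_right[symmetric] dist_real_def)
    then show ?case
      using t by (simp add: diff_divide_distrib[symmetric] abs_div pos_divide_le_eq mult_ac)
  qed
qed simp

section \<open>The truncation loop\<close>

definition level :: "(nat \<Rightarrow> 'a set) \<Rightarrow> nat \<Rightarrow> 'a \<Rightarrow> nat" where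
  "level S m y = (GREATEST i. i \<le> m \<and> y \<in> S i)"

text \<open>A truncation at level i moves the point by at most \<kappa> eps (c i) and increments the counter
  c i, so the total movement of the truncation loop is bounded by \<kappa> times the increase of
  this potential, which stays below m times the sum of eps.\<close>

definition counter_potential :: "nat \<Rightarrow> (nat \<Rightarrow> real) \<Rightarrow> (nat \<Rightarrow> nat) \<Rightarrow> real" where
  "counter_potential m eps c = (\<Sum>i<m. \<Sum>j<c i. eps j)"

locale truncation =
  fixes G :: "'a::real_normed_vector \<Rightarrow> ereal" and S :: "nat \<Rightarrow> 'a set" and m :: nat
    and T :: "'a \<Rightarrow> real \<Rightarrow> 'a" and eps :: "nat \<Rightarrow> real" and \<delta> :: ereal and \<kappa> :: real
  assumes S0: "S 0 = UNIV"
    and S_nested: "\<forall>i<m. S (Suc i) \<subseteq> S i"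
    and trunc_i: "\<forall>y\<in>S m. G y \<ge> \<delta>"
    and trunc_ii: "\<forall>a i y. 0 < a \<and> ereal a \<le> \<delta> \<and> i < m \<and> y \<in> S i - S (Suc i) \<longrightarrow>
         (G y \<ge> ereal a \<longrightarrow> T y a = y) \<and>
         (G y < ereal a \<longrightarrow> T y a \<in> S (Suc i) \<and> G (T y a) \<ge> ereal a \<and> norm (T y a - y) \<le> \<kappa> * a)"
    and eps_pos: "\<forall>j. eps j > 0"
    and eps_le: "\<forall>j. ereal (eps j) \<le> \<delta>"
begin

lemma S_antimono: "i \<le> j \<Longrightarrow> j \<le> m \<Longrightarrow> S j \<subseteq> S i"
proof (induction j)
  case (Suc j)
  show ?case
  proof (cases "i = Suc j")
    case False
    then have "S j \<subseteq> S i" using Suc by simp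
    moreover have "S (Suc j) \<subseteq> S j" using S_nested Suc.prems(2) by simp
    ultimately show ?thesis by blast
  qed simp
qed simp

lemma level_le: "level S m y \<le> m"
  and mem_S_level: "y \<in> S (level S m y)"
  and le_level: "j \<le> m \<Longrightarrow> y \<in> S j \<Longrightarrow> j \<le> level S m y"
proof -
  have "level S m y \<le> m \<and> y \<in> S (level S m y)"
    unfolding level_def by (rule GreatestI_nat[of _ 0 m]) (use S0 in auto)
  then show "level S m y \<le> m" "y \<in> S (level S m y)" by auto
  show "j \<le> m \<Longrightarrow> y \<in> S j \<Longrightarrow> j \<le> level S m y"
    unfolding level_def by (rule Greatest_le_nat[where b = m]) auto
qed

lemma mem_lvl_diff_iff: "y \<in> lvl S m i - lvl S m (Suc i) \<longleftrightarrow> i = level S m y"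
proof
  assume y: "y \<in> lvl S m i - lvl S m (Suc i)"
  then have "i \<le> m" "y \<in> S i" by (auto simp: lvl_def split: if_splits)
  then have "i \<le> level S m y" by (rule le_level)
  moreover have "\<not> i < level S m y"
  proof
    assume "i < level S m y"
    then have "y \<in> S (Suc i)" "Suc i \<le> m"
      using S_antimono[of "Suc i" "level S m y"] level_le[of y] mem_S_level[of y] by auto
    then show False using y by (auto simp: lvl_def)
  qed
  ultimately show "i = level S m y" by simp
next
  assume "i = level S m y"
  then show "y \<in> lvl S m i - lvl S m (Suc i)"
    using level_le[of y] mem_S_level[of y] le_level[of "Suc i" y] by (auto simp: lvl_def)
qed

lemma counter_potential_incr:
  "i < m \<Longrightarrow> counter_potential m eps (c(i := Suc (c i))) = counter_potential m eps c + eps (c i)"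
proof -
  assume "i < m"
  have "counter_potential m eps (c(i := Suc (c i)))
      = (\<Sum>k<m. (\<Sum>j<c k. eps j) + (if k = i then eps (c i) else 0))"
    unfolding counter_potential_def by (intro sum.cong) auto
  also have "\<dots> = counter_potential m eps c + eps (c i)"
    using \<open>i < m\<close> by (simp add: sum.distrib counter_potential_def)
  finally show ?thesis .
qed

lemma counter_potential_mono:
  "(\<And>i. c i \<le> c' i) \<Longrightarrow> counter_potential m eps c \<le> counter_potential m eps c'"
  unfolding counter_potential_def using eps_pos
  by (intro sum_mono sum_mono2) (auto simp: less_imp_le)

lemma counter_potential_nonneg: "0 \<le> counter_potential m eps c"
  unfolding counter_potential_def using eps_pos by (intro sum_nonneg) (auto simp: less_imp_le)

lemma counter_potential_le_suminf:
  assumes "summable eps"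
  shows "counter_potential m eps c \<le> m * suminf eps"
proof -
  have "(\<Sum>j<c i. eps j) \<le> suminf eps" for i
    using assms eps_pos by (intro sum_le_suminf) (auto simp: less_imp_le)
  then have "counter_potential m eps c \<le> (\<Sum>i<m. suminf eps)"
    unfolding counter_potential_def by (intro sum_mono)
  then show ?thesis by simp
qed

lemma truncation_step:
  assumes i: "i = level S m y" and G: "G y < ereal (eps (c i))"
  defines "y' \<equiv> T y (eps (c i))"
  shows "i < m" and "Suc i \<le> level S m y'" and "norm (y' - y) \<le> \<kappa> * eps (c i)"
proof -
  show im: "i < m"
  proof (rule ccontr)
    assume "\<not> i < m"
    then have "G y \<ge> \<delta>" using trunc_i i level_le[of y] mem_S_level[of y] by (simp add: le_antisym)
    then show False using G eps_le by (meson leD order.trans)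
  qed
  have "y \<in> S i - S (Suc i)" using mem_lvl_diff_iff[of y i] i im by (simp add: lvl_def)
  then have "y' \<in> S (Suc i)" "norm (y' - y) \<le> \<kappa> * eps (c i)"
    using trunc_ii[rule_format, of "eps (c i)" i y] eps_pos eps_le im G by (auto simp: y'_def)
  then show "Suc i \<le> level S m y'" "norm (y' - y) \<le> \<kappa> * eps (c i)"
    using le_level im by auto
qed

lemma trunc_loop_invariant:
  assumes "trunc_loop G S m T eps c y c' y'"
  shows "(\<forall>i. c i \<le> c' i) \<and> level S m y \<le> level S m y' \<and> (\<forall>i. c' i \<noteq> c i \<longrightarrow> i < level S m y')
    \<and> norm (y' - y) \<le> \<kappa> * (counter_potential m eps c' - counter_potential m eps c)"
  using assms
proof (induction rule: trunc_loop.induct)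
  case (stop x i c)
  then show ?case by simp
next
  case (step x i c c' x')
  have i: "i = level S m x" using step(1) mem_lvl_diff_iff by blast
  note tr = truncation_step[where c = c, OF i step(2)]
  define c1 x1 where "c1 = c(i := Suc (c i))" and "x1 = T x (eps (c i))"
  have IH: "\<forall>j. c1 j \<le> c' j" "level S m x1 \<le> level S m x'" "\<forall>j. c' j \<noteq> c1 j \<longrightarrow> j < level S m x'"
    "norm (x' - x1) \<le> \<kappa> * (counter_potential m eps c' - counter_potential m eps c1)"
    using step.IH[folded c1_def x1_def] by simp_all
  have "c j \<le> c' j" for j
    using IH(1)[rule_format, of j] by (simp add: c1_def split: if_splits)
  moreover have "level S m x \<le> level S m x'"
    using IH(2) tr(2) i unfolding x1_def by linarith
  moreover have "j < level S m x'" if "c' j \<noteq> c j" for j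
  proof (cases "j = i")
    case True
    then show ?thesis using IH(2) tr(2) unfolding x1_def by linarith
  next
    case False
    then show ?thesis using IH(3) that by (simp add: c1_def)
  qed
  moreover have "norm (x' - x) \<le> \<kappa> * (counter_potential m eps c' - counter_potential m eps c)"
  proof -
    have "norm (x' - x) \<le> norm (x' - x1) + norm (x1 - x)"
      using norm_triangle_ineq[of "x' - x1" "x1 - x"] by simp
    moreover have "\<kappa> * (counter_potential m eps c' - counter_potential m eps c1) + \<kappa> * eps (c i)
        = \<kappa> * (counter_potential m eps c' - counter_potential m eps c)"
      using counter_potential_incr[OF tr(1), of c] by (simp add: c1_def algebra_simps)
    ultimately show ?thesis using IH(4) tr(3) unfolding x1_def by linarith
  qed
  ultimately show ?case by auto
qed

lemma trunc_loop_stop: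
  "trunc_loop G S m T eps c y c' y' \<Longrightarrow> G y' \<ge> ereal (eps (c' (level S m y')))"
proof (induction rule: trunc_loop.induct)
  case (stop x i c)
  then show ?case using mem_lvl_diff_iff[of x i] by simp
qed

lemma trunc_loop_trivial:
  assumes "trunc_loop G S m T eps c y c' y'" and "G y \<ge> ereal (eps (c (level S m y)))"
  shows "c' = c \<and> y' = y"
  using assms(1)
proof (cases rule: trunc_loop.cases)
  case (step i)
  then show ?thesis using assms(2) mem_lvl_diff_iff by auto
qed auto

end

section \<open>The Cauchy point and the safeguarded step\<close>

lemma quadratic_argmax_mult_le:
  fixes G c D a :: real
  assumes G: "G > 0" and a: "0 \<le> a" "a \<le> D"
    and max: "\<And>t. 0 \<le> t \<Longrightarrow> t \<le> D \<Longrightarrow> t * G - t\<^sup>2 / 2 * c \<le> a * G - a\<^sup>2 / 2 * c"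
  shows "a * c \<le> G"
proof (rule ccontr)
  assume ac: "\<not> a * c \<le> G"
  have c: "c > 0"
  proof (rule ccontr)
    assume "\<not> c > 0"
    then have "a * c \<le> 0" using a by (simp add: mult_nonneg_nonpos)
    then show False using ac G by simp
  qed
  define t where "t = G / c"
  have t: "0 \<le> t" "t < a" using ac c G by (auto simp: t_def pos_divide_less_eq)
  have "(t * G - t\<^sup>2 / 2 * c) - (a * G - a\<^sup>2 / 2 * c) = c / 2 * (a - t)\<^sup>2"
    using c by (simp add: t_def power2_eq_square field_simps)
  moreover have "c / 2 * (a - t)\<^sup>2 > 0" using c t by simp
  ultimately show False using max[of t] t a by linarith
qed

lemma quadratic_argmax_ge_half_linear:
  fixes G c D a t :: real
  assumes G: "G > 0" and a: "0 \<le> a" "a \<le> D"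
    and max: "\<And>t. 0 \<le> t \<Longrightarrow> t \<le> D \<Longrightarrow> t * G - t\<^sup>2 / 2 * c \<le> a * G - a\<^sup>2 / 2 * c"
    and t: "0 \<le> t" "t \<le> a"
  shows "t * G / 2 \<le> t * G - t\<^sup>2 / 2 * c"
proof (cases "c \<le> 0")
  case True
  then have "t\<^sup>2 / 2 * c \<le> 0" by (simp add: mult_nonneg_nonpos)
  moreover have "0 \<le> t * G" using t G by simp
  ultimately show ?thesis by linarith
next
  case False
  have "t * c \<le> a * c" using t False by (intro mult_right_mono) auto
  also have "\<dots> \<le> G" by (rule quadratic_argmax_mult_le[OF G a max])
  finally have "t * (t * c) \<le> t * G" using t by (intro mult_left_mono) auto
  then show ?thesis by (simp add: power2_eq_square algebra_simps)
qed

lemma quadratic_argmax_ge_min: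
  fixes G c D a K :: real
  assumes G: "G > 0" and K: "K > 0" and cK: "c \<le> K * G" and D: "D > 0" and a: "0 \<le> a" "a \<le> D"
    and max: "\<And>t. 0 \<le> t \<Longrightarrow> t \<le> D \<Longrightarrow> t * G - t\<^sup>2 / 2 * c \<le> a * G - a\<^sup>2 / 2 * c"
  shows "min D (1 / K) \<le> a"
proof (rule ccontr)
  assume "\<not> min D (1 / K) \<le> a"
  define t where "t = min D (1 / K)"
  have t: "0 < t" "t \<le> D" "t \<le> 1 / K" "a < t"
    using D K \<open>\<not> min D (1 / K) \<le> a\<close> by (auto simp: t_def)
  have "(t + a) / 2 * c < G"
  proof (cases "c \<le> 0")
    case True
    have "0 \<le> (t + a) / 2" using t a by simp
    then have "(t + a) / 2 * c \<le> 0" using True by (simp add: mult_nonneg_nonpos)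
    then show ?thesis using G by simp
  next
    case False
    then have "(t + a) / 2 * c < t * c" using t by (intro mult_strict_right_mono) auto
    also have "\<dots> \<le> (1 / K) * (K * G)" using t cK False K by (intro mult_mono) auto
    finally show ?thesis using K by simp
  qed
  then have "0 < (t - a) * (G - (t + a) / 2 * c)" using t by simp
  also have "\<dots> = (t * G - t\<^sup>2 / 2 * c) - (a * G - a\<^sup>2 / 2 * c)"
    by (simp add: power2_eq_square field_simps)
  finally show False using max[of t] t by linarith
qed

lemma safe_step_pos: "Gs y (sgn v) > 0 \<Longrightarrow> v \<noteq> 0 \<Longrightarrow> 0 < safe_step Gs y v"
  and safe_step_le_norm: "Gs y (sgn v) > 0 \<Longrightarrow> v \<noteq> 0 \<Longrightarrow> safe_step Gs y v \<le> norm v"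
  and safe_step_ge_min: "Gs y (sgn v) > 0 \<Longrightarrow> v \<noteq> 0 \<Longrightarrow> ereal e \<le> Gs y (sgn v) \<Longrightarrow>
    min e (norm v) \<le> safe_step Gs y v"
  by (cases "Gs y (sgn v)"; auto simp: safe_step_def min_def)+

section \<open>Sequences\<close>

lemma frequently_Suc_ne_if_unbounded:
  fixes f :: "nat \<Rightarrow> nat"
  assumes mono: "\<And>k. f k \<le> f (Suc k)" and unbounded: "\<And>b. \<exists>k. b < f k"
  shows "\<exists>k\<ge>K. f (Suc k) \<noteq> f k"
proof (rule ccontr)
  assume "\<not> ?thesis"
  then have const: "f (K + n) = f K" for n by (induction n) auto
  have bounded: "f k \<le> f K" for k
  proof (cases "k \<le> K")
    case True
    then show ?thesis by (rule lift_Suc_mono_le[of f, OF mono])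
  next
    case False
    then show ?thesis using const[of "k - K"] by simp
  qed
  from unbounded[of "f K"] obtain k where "f K < f k" ..
  with bounded[of k] show False by simp
qed

lemma frequently_counter_at_level_bounded:
  fixes c :: "nat \<Rightarrow> nat \<Rightarrow> nat" and lv :: "nat \<Rightarrow> nat"
  assumes mono: "\<And>k i. c k i \<le> c (Suc k) i"
    and changed: "\<And>k i. c (Suc k) i \<noteq> c k i \<Longrightarrow> i < lv k"
    and lv_le: "\<And>k. lv k \<le> m"
  shows "\<exists>N. \<forall>K. \<exists>k\<ge>K. c (Suc k) (lv k) \<le> N"
proof -
  define J where "J = {i. i \<le> m \<and> (\<forall>b. \<exists>k. b < c k i)}"
  have "\<exists>b. \<forall>k. c k i \<le> b" if "i \<le> m" "i \<notin> J" for i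
    using that by (auto simp: J_def not_less)
  then obtain B where B: "\<And>i k. i \<le> m \<Longrightarrow> i \<notin> J \<Longrightarrow> c k i \<le> B i" by metis
  define N where "N = (\<Sum>i\<le>m. B i)"
  have N: "c k i \<le> N" if "i \<le> m" "i \<notin> J" for k i
    using B[OF that, of k] member_le_sum[of i "{..m}" B] that by (simp add: N_def)
  \<comment> \<open>The largest counter that grows without bound keeps changing, and whenever it does, the
    iterate lands on a higher level, whose counter is bounded.\<close>
  have "\<exists>k\<ge>K. c (Suc k) (lv k) \<le> N" for K
  proof (cases "J = {}")
    case True
    then show ?thesis using N lv_le by blast
  next
    case False
    define j where "j = Max J"
    have fin: "finite J" unfolding J_def by (rule finite_subset[of _ "{..m}"]) auto
    then have j: "j \<in> J" using False by (simp add: j_def)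
    have "\<exists>k\<ge>K. c (Suc k) j \<noteq> c k j"
      using j by (intro frequently_Suc_ne_if_unbounded mono) (auto simp: J_def)
    then obtain k where k: "k \<ge> K" "j < lv k" using changed by blast
    have "lv k \<notin> J"
    proof
      assume "lv k \<in> J"
      with fin have "lv k \<le> j" unfolding j_def by (rule Max_ge)
      with k(2) show False by simp
    qed
    then show ?thesis using k N lv_le by blast
  qed
  then show ?thesis by blast
qed

lemma strict_mono_subseq_choice:
  assumes "\<And>n K. \<exists>k\<ge>K. P n k"
  obtains r :: "nat \<Rightarrow> nat" where "strict_mono r" "\<And>n. P n (r n)"
proof -
  define f where "f n K = (SOME k. k \<ge> K \<and> P n k)" for n K
  have f: "f n K \<ge> K \<and> P n (f n K)" for n K
    unfolding f_def using someI_ex[OF assms[of K n]] .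
  define r where "r = rec_nat (f 0 0) (\<lambda>n k. f (Suc n) (Suc k))"
  have r0: "r 0 = f 0 0" and rSuc: "r (Suc n) = f (Suc n) (Suc (r n))" for n
    by (simp_all add: r_def)
  have "r n < r (Suc n)" for n using f[of "Suc (r n)" "Suc n"] rSuc[of n] by simp
  then have "strict_mono r" by (simp add: strict_mono_Suc_iff)
  moreover have "P n (r n)" for n by (cases n) (use f r0 rSuc in auto)
  ultimately show ?thesis by (rule that)
qed

lemma tendsto_if_subseq_tendsto_and_summable_local_steps:
  fixes x :: "nat \<Rightarrow> 'a::real_normed_vector"
  assumes w: "summable w" "\<And>k. 0 \<le> w k" and r: "r > 0"
    and steps: "\<And>k. x k \<in> ball xs r \<Longrightarrow> norm (x (Suc k) - x k) \<le> w k"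
    and kl: "strict_mono kl" "(\<lambda>l. x (kl l)) \<longlonglongrightarrow> xs"
  shows "x \<longlonglongrightarrow> xs"
proof (rule LIMSEQ_I)
  fix \<epsilon> :: real assume "\<epsilon> > 0"
  define e where "e = min \<epsilon> r"
  have e: "e > 0" "e \<le> \<epsilon>" "e \<le> r" using \<open>\<epsilon> > 0\<close> r by (auto simp: e_def)
  obtain N where N: "\<And>n. n \<ge> N \<Longrightarrow> norm (\<Sum>i. w (i + n)) < e / 2"
    using suminf_exist_split[OF _ w(1), of "e / 2"] e by auto
  obtain L where L: "\<And>l. l \<ge> L \<Longrightarrow> norm (x (kl l) - xs) < e / 2"
    using LIMSEQ_D[OF kl(2), of "e / 2"] e by auto
  define K where "K = kl (max L N)"
  have K: "norm (x K - xs) < e / 2" "K \<ge> N"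
    using L[of "max L N"] seq_suble[OF kl(1), of "max L N"] by (auto simp: K_def)
  have tail: "(\<Sum>i<j. w (K + i)) < e / 2" for j
  proof -
    have "(\<Sum>i<j. w (i + K)) \<le> (\<Sum>i. w (i + K))"
      using w by (intro sum_le_suminf summable_ignore_initial_segment) auto
    also have "\<dots> < e / 2" using N[OF K(2)] by simp
    finally show ?thesis by (simp add: add.commute)
  qed
  \<comment> \<open>Once x K is within e/2 of xs, the remaining steps add up to less than e/2, so the
    iterates never leave the ball on which the step bound holds.\<close>
  have close: "norm (x (K + j) - xs) \<le> norm (x K - xs) + (\<Sum>i<j. w (K + i))" for j
  proof (induction j)
    case (Suc j)
    then have "x (K + j) \<in> ball xs r"
      using tail[of j] K(1) e by (simp add: dist_norm norm_minus_commute)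
    then have "norm (x (Suc (K + j)) - x (K + j)) \<le> w (K + j)" by (rule steps)
    moreover have "norm (x (Suc (K + j)) - xs) \<le> norm (x (Suc (K + j)) - x (K + j)) + norm (x (K + j) - xs)"
      by (rule norm_diff_triangle_le) auto
    ultimately show ?case using Suc by simp
  qed simp
  show "\<exists>no. \<forall>n\<ge>no. norm (x n - xs) < \<epsilon>"
  proof (intro exI allI impI)
    fix n assume "K \<le> n"
    then show "norm (x n - xs) < \<epsilon>"
      using close[of "n - K"] tail[of "n - K"] K(1) e by simp
  qed
qed

lemma eventually_ge_min_if_nondecreasing_below:
  fixes \<Delta> :: "nat \<Rightarrow> real"
  assumes grow: "\<And>k. k \<ge> K \<Longrightarrow> \<Delta> k \<le> h \<Longrightarrow> \<Delta> k \<le> \<Delta> (Suc k)"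
    and drop: "\<And>k. k \<ge> K \<Longrightarrow> h < \<Delta> k \<Longrightarrow> a \<le> \<Delta> (Suc k)"
  shows "k \<ge> K \<Longrightarrow> min (\<Delta> K) a \<le> \<Delta> k"
proof (induction k rule: dec_induct)
  case (step k)
  then show ?case using grow[OF step(1)] drop[OF step(1)] by (cases "\<Delta> k \<le> h") auto
qed simp

lemma tendsto_zero_if_zero_at_cluster_points:
  fixes x :: "nat \<Rightarrow> 'a::heine_borel" and F :: "'a \<Rightarrow> 'b::real_normed_vector"
  assumes bounded: "bounded (range x)" and cont: "continuous_on UNIV F"
    and cluster: "\<And>r l. strict_mono r \<Longrightarrow> (x \<circ> r) \<longlonglongrightarrow> l \<Longrightarrow> F l = 0"
  shows "(\<lambda>k. F (x k)) \<longlonglongrightarrow> 0"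
proof (rule ccontr)
  assume "\<not> ?thesis"
  then have "\<exists>\<epsilon>>0. \<forall>K. \<exists>k\<ge>K. \<epsilon> \<le> norm (F (x k))"
    unfolding LIMSEQ_iff by (simp add: not_less)
  then obtain \<epsilon> where \<epsilon>: "\<epsilon> > 0" and often: "\<And>K. \<exists>k\<ge>K. \<epsilon> \<le> norm (F (x k))"
    by blast
  obtain r1 :: "nat \<Rightarrow> nat" where r1: "strict_mono r1" "\<And>n. \<epsilon> \<le> norm (F (x (r1 n)))"
    using strict_mono_subseq_choice[of "\<lambda>_ k. \<epsilon> \<le> norm (F (x k))", OF often] by blast
  have "bounded (range (x \<circ> r1))" using bounded by (rule bounded_subset) auto
  from bounded_imp_convergent_subsequence[OF this]
  obtain l r2 where r2: "strict_mono r2" "((x \<circ> r1) \<circ> r2) \<longlonglongrightarrow> l"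
    by (elim exE conjE)
  have "strict_mono (r1 \<circ> r2)" using r1(1) r2(1) by (rule strict_mono_o)
  then have "F l = 0" using cluster r2(2) by (simp add: o_assoc)
  moreover have "(\<lambda>n. F (((x \<circ> r1) \<circ> r2) n)) \<longlonglongrightarrow> F l"
    using cont r2(2) by (intro continuous_on_tendsto_compose[of UNIV F]) (auto simp: o_def)
  ultimately have "(\<lambda>n. norm (F (x (r1 (r2 n))))) \<longlonglongrightarrow> 0"
    by (simp add: tendsto_norm_zero)
  then have "\<forall>\<^sub>F n in sequentially. norm (F (x (r1 (r2 n)))) < \<epsilon>"
    using \<epsilon> by (rule order_tendstoD(2))
  then obtain N where "\<And>n. n \<ge> N \<Longrightarrow> norm (F (x (r1 (r2 n)))) < \<epsilon>"
    by (auto simp: eventually_sequentially)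
  then show False using r1(2)[of "r2 N"] by force
qed

section \<open>A non-terminating run of the method\<close>

(* The hypotheses of the theorem, with the bounds of (B.1) and (B.2) fixed as the parameters R
   and kappaB. *)
locale trust_region_run =
  fixes f phi psi :: "real^'n \<Rightarrow> real" and gradf :: "real^'n \<Rightarrow> real^'n"
    and u :: "real^'n \<Rightarrow> real" and d g :: "real^'n \<Rightarrow> real^'n"
    and Gs :: "real^'n \<Rightarrow> real^'n \<Rightarrow> ereal"
    and S :: "nat \<Rightarrow> (real^'n) set" and m :: nat and \<delta> :: ereal and \<kappa> :: real
    and T :: "real^'n \<Rightarrow> real \<Rightarrow> real^'n"
    and \<eta> \<eta>1 \<eta>2 r1 r2 \<Delta>max \<gamma>1 \<gamma>2 :: real and eps :: "nat \<Rightarrow> real" and ell :: "real \<Rightarrow> real"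
    and x xt s sC ssel sbar :: "nat \<Rightarrow> real^'n" and B :: "nat \<Rightarrow> real^'n^'n"
    and \<Delta> \<alpha>C \<rho>1 \<rho>2 \<alpha> :: "nat \<Rightarrow> real" and c :: "nat \<Rightarrow> nat \<Rightarrow> nat"
    and R \<kappa>B :: real
  assumes f_deriv: "\<forall>y. (f has_derivative (\<lambda>h. gradf y \<bullet> h)) (at y)"
    and gradf_cont: "continuous_on UNIV gradf"
    and phi_convex: "convex_on UNIV phi"
    and psi_def: "psi = (\<lambda>y. f y + phi y)"
    and g_def: "g = (\<lambda>y. u y *\<^sub>R d y)"
    and pg_nonstat: "\<forall>y. \<not> stationary gradf phi y \<longrightarrow>
         norm (d y) = 1 \<and> dir_deriv psi y (d y) < 0 \<and> dir_deriv psi y (d y) \<le> u y \<and> u y < 0"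
    and pg_stat: "\<forall>y. stationary gradf phi y \<longrightarrow> d y = 0 \<and> u y = 0"
    and Gs_pos: "\<forall>y v. norm v = 1 \<longrightarrow> Gs y v > 0"
    and S0: "S 0 = UNIV"
    and S_nested: "\<forall>i<m. S (Suc i) \<subseteq> S i"
    and \<kappa>_pos: "\<kappa> > 0"
    and trunc_i: "\<forall>y\<in>S m. Gamma_min psi y \<ge> \<delta>"
    and trunc_ii: "\<forall>a i y. 0 < a \<and> ereal a \<le> \<delta> \<and> i < m \<and> y \<in> S i - S (Suc i) \<longrightarrow>
         (Gamma_min psi y \<ge> ereal a \<longrightarrow> T y a = y) \<and>
         (Gamma_min psi y < ereal a \<longrightarrow> T y a \<in> S (Suc i) \<and> Gamma_min psi (T y a) \<ge> ereal a
                                     \<and> norm (T y a - y) \<le> \<kappa> * a)"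
    and params: "0 < \<eta> \<and> \<eta> < \<eta>1 \<and> \<eta>1 < \<eta>2 \<and> \<eta>2 < 1 \<and> 0 < r1 \<and> r1 < 1 \<and> 1 < r2
                 \<and> \<Delta>max > 0 \<and> \<gamma>1 > 0 \<and> \<gamma>2 > 0"
    and eps_pos: "\<forall>j. eps j > 0"
    and eps_decr: "\<forall>j. eps (Suc j) < eps j"
    and eps_summable: "summable eps"
    and eps_le: "\<forall>j. ereal (eps j) \<le> \<delta>"
    and ell_range: "\<forall>t>0. 0 \<le> ell t \<and> ell t \<le> 1/2"
    and ell_lim: "(ell \<longlongrightarrow> 0) (at_right 0)"
    and \<Delta>0: "\<Delta> 0 > 0"
    and nonterm: "\<forall>k. g (x k) \<noteq> 0"
    and cauchy: "\<forall>k. 0 \<le> \<alpha>C k \<and> \<alpha>C k \<le> \<Delta> k / norm (g (x k)) \<and>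
         (\<forall>t. 0 \<le> t \<and> t \<le> \<Delta> k / norm (g (x k)) \<longrightarrow>
            tr_model (psi (x k)) (g (x k)) (B k) (- (\<alpha>C k *\<^sub>R g (x k)))
              \<le> tr_model (psi (x k)) (g (x k)) (B k) (- (t *\<^sub>R g (x k))))"
    and sC_def: "\<forall>k. sC k = - (\<alpha>C k *\<^sub>R g (x k))"
    and s_tr: "\<forall>k. norm (s k) \<le> \<Delta> k"
    and s_dec1: "\<forall>k. tr_model (psi (x k)) (g (x k)) (B k) 0 - tr_model (psi (x k)) (g (x k)) (B k) (s k)
         \<ge> \<gamma>1 / 2 * norm (g (x k)) * min (\<Delta> k) (\<gamma>2 * norm (g (x k)))"
    and s_dec2: "\<forall>k. tr_model (psi (x k)) (g (x k)) (B k) 0 - tr_model (psi (x k)) (g (x k)) (B k) (s k)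
         \<ge> (1 - ell (norm (s k))) * (tr_model (psi (x k)) (g (x k)) (B k) 0
                                     - tr_model (psi (x k)) (g (x k)) (B k) (sC k))"
    and \<rho>1_def: "\<forall>k. \<rho>1 k = (psi (x k) - psi (x k + s k)) /
         (tr_model (psi (x k)) (g (x k)) (B k) 0 - tr_model (psi (x k)) (g (x k)) (B k) (s k))"
    and ssel_def: "\<forall>k. ssel k =
         (if tr_model (psi (x k)) (g (x k)) (B k) 0
             - tr_model (psi (x k)) (g (x k)) (B k) (safe_step Gs (x k) (s k) *\<^sub>R sgn (s k))
           < safe_step Gs (x k) (s k) / (2 * norm (s k)) *
             (tr_model (psi (x k)) (g (x k)) (B k) 0 - tr_model (psi (x k)) (g (x k)) (B k) (s k))
          then sC k else s k)"
    and sbar_def: "\<forall>k. sbar k = sgn (ssel k)"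
    and \<alpha>_def: "\<forall>k. \<alpha> k = safe_step Gs (x k) (ssel k)"
    and \<rho>2_def: "\<forall>k. \<rho>2 k = (psi (x k) - psi (x k + \<alpha> k *\<^sub>R sbar k)) /
         (tr_model (psi (x k)) (g (x k)) (B k) 0
            - tr_model (psi (x k)) (g (x k)) (B k) (\<alpha> k *\<^sub>R sbar k))"
    and update: "\<forall>k. (\<rho>1 k \<ge> \<eta>1 \<longrightarrow> xt k = x k + s k \<and>
            \<Delta> (Suc k) = (if \<rho>1 k > \<eta>2 then min \<Delta>max (r2 * \<Delta> k) else \<Delta> k)) \<and>
         (\<rho>1 k < \<eta>1 \<longrightarrow>
            \<Delta> (Suc k) = (if \<rho>2 k < \<eta>1 then r1 * \<Delta> k
                          else if \<rho>2 k > \<eta>2 then min \<Delta>max (r2 * \<Delta> k) else \<Delta> k) \<and>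
            xt k = (if \<rho>2 k \<ge> \<eta> then x k + \<alpha> k *\<^sub>R sbar k else x k))"
    and trunc_step: "\<forall>k. trunc_loop (Gamma_min psi) S m T eps (c k) (xt k) (c (Suc k)) (x (Suc k))"
    and A1: "bdd_below (range psi)"
    and A2: "\<forall>y. g y \<noteq> 0 \<longrightarrow> (\<exists>r>0. \<exists>e>0. \<forall>z\<in>ball y r. norm (g z) \<ge> e)"
    and B3: "\<forall>kl. strict_mono kl \<and> convergent (\<lambda>l. x (kl l)) \<and> (\<lambda>l. \<alpha> (kl l)) \<longlonglongrightarrow> 0 \<longrightarrow>
         (\<lambda>l. psi (x (kl l) + \<alpha> (kl l) *\<^sub>R sbar (kl l)) - psi (x (kl l))
               - \<alpha> (kl l) * dir_deriv psi (x (kl l)) (sbar (kl l)))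
           \<in> o[sequentially](\<lambda>l. \<alpha> (kl l))"
    and B4: "\<forall>e>0. \<exists>e'>0. \<forall>k. Gamma_min psi (x k) \<ge> ereal e \<longrightarrow> Gs (x k) (sbar k) \<ge> ereal e'"
    and x_bounded: "\<forall>k. x k \<in> ball 0 R"
    and \<kappa>B_pos: "\<kappa>B > 0"
    and B_bounded: "\<forall>k. norm (B k) \<le> \<kappa>B"
begin

lemma g_eq_0_iff_stationary: "g y = 0 \<longleftrightarrow> stationary gradf phi y"
  using pg_nonstat pg_stat by (auto simp: g_def)

lemma norm_d: "norm (d (x k)) = 1"
  and g_eq_scaled_d: "g (x k) = - (norm (g (x k)) *\<^sub>R d (x k))"
  and dir_deriv_d_le: "dir_deriv psi (x k) (d (x k)) \<le> - norm (g (x k))"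
proof -
  have "norm (d (x k)) = 1" "u (x k) < 0" "dir_deriv psi (x k) (d (x k)) \<le> u (x k)"
    using nonterm pg_nonstat g_eq_0_iff_stationary by auto
  then show "norm (d (x k)) = 1" "g (x k) = - (norm (g (x k)) *\<^sub>R d (x k))"
    "dir_deriv psi (x k) (d (x k)) \<le> - norm (g (x k))"
    by (simp_all add: g_def)
qed

lemma norm_g_pos: "0 < norm (g (x k))"
  using nonterm by simp

lemma quadratic_B_le: "\<bar>v \<bullet> (B k *v v)\<bar> \<le> \<kappa>B * (norm v)\<^sup>2"
  using quadratic_form_abs_le[of v "B k"] B_bounded mult_right_mono[of "norm (B k)" \<kappa>B "(norm v)\<^sup>2"]
  by simp

definition model_decrease :: "nat \<Rightarrow> real^'n \<Rightarrow> real" where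
  "model_decrease k v = tr_model (psi (x k)) (g (x k)) (B k) 0 - tr_model (psi (x k)) (g (x k)) (B k) v"

lemma model_decrease_eq: "model_decrease k v = - (g (x k) \<bullet> v) - 1/2 * (v \<bullet> (B k *v v))"
  by (simp add: model_decrease_def tr_model_def)

definition radius_bound :: real where
  "radius_bound = max (\<Delta> 0) \<Delta>max"

lemma radius_cases: "\<Delta> (Suc k) = r1 * \<Delta> k \<or> \<Delta> (Suc k) = min \<Delta>max (r2 * \<Delta> k) \<or> \<Delta> (Suc k) = \<Delta> k"
  using update[rule_format, of k] by (cases "\<rho>1 k \<ge> \<eta>1") (auto split: if_splits)

lemma radius_pos_le: "0 < \<Delta> k \<and> \<Delta> k \<le> radius_bound"
proof (induction k)
  case 0
  then show ?case using \<Delta>0 by (simp add: radius_bound_def)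
next
  case (Suc k)
  have "0 < r1 * \<Delta> k" "r1 * \<Delta> k \<le> \<Delta> k"
    "0 < min \<Delta>max (r2 * \<Delta> k)" "min \<Delta>max (r2 * \<Delta> k) \<le> radius_bound"
    using params Suc by (simp_all add: radius_bound_def)
  then show ?case using radius_cases[of k] Suc by (elim disjE) linarith+
qed

lemma radius_pos: "0 < \<Delta> k" and radius_le_bound: "\<Delta> k \<le> radius_bound"
  using radius_pos_le by auto

lemma model_decrease_s_ge:
  "\<gamma>1 / 2 * norm (g (x k)) * min (\<Delta> k) (\<gamma>2 * norm (g (x k))) \<le> model_decrease k (s k)"
  using s_dec1 by (simp add: model_decrease_def)

lemma model_decrease_s_pos: "0 < model_decrease k (s k)"
proof -
  have "0 < \<gamma>1 / 2 * norm (g (x k)) * min (\<Delta> k) (\<gamma>2 * norm (g (x k)))"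
    using params norm_g_pos[of k] radius_pos[of k] by simp
  then show ?thesis using model_decrease_s_ge[of k] by linarith
qed

lemma s_ne_0: "s k \<noteq> 0"
  using model_decrease_s_pos[of k] by (auto simp: model_decrease_def)

lemma model_decrease_along_g:
  "model_decrease k (- (t *\<^sub>R g (x k)))
    = t * (norm (g (x k)))\<^sup>2 - t\<^sup>2 / 2 * (g (x k) \<bullet> (B k *v g (x k)))"
  by (simp add: model_decrease_eq matrix_vector_mult_scaleR matrix_vector_mult_uminus
      dot_square_norm power2_eq_square mult.assoc)

lemma cauchy_max:
  assumes "0 \<le> t" "t \<le> \<Delta> k / norm (g (x k))"
  shows "t * (norm (g (x k)))\<^sup>2 - t\<^sup>2 / 2 * (g (x k) \<bullet> (B k *v g (x k)))
    \<le> \<alpha>C k * (norm (g (x k)))\<^sup>2 - (\<alpha>C k)\<^sup>2 / 2 * (g (x k) \<bullet> (B k *v g (x k)))"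
proof -
  have "model_decrease k (- (t *\<^sub>R g (x k))) \<le> model_decrease k (- (\<alpha>C k *\<^sub>R g (x k)))"
    using cauchy assms by (simp add: model_decrease_def)
  then show ?thesis by (simp only: model_decrease_along_g)
qed

lemma cauchy_step_ge: "min (\<Delta> k / norm (g (x k))) (1 / \<kappa>B) \<le> \<alpha>C k"
proof (rule quadratic_argmax_ge_min[OF _ \<kappa>B_pos _ _ _ _ cauchy_max])
  show "0 < (norm (g (x k)))\<^sup>2" using norm_g_pos by simp
  show "g (x k) \<bullet> (B k *v g (x k)) \<le> \<kappa>B * (norm (g (x k)))\<^sup>2"
    using quadratic_B_le[of "g (x k)" k] by linarith
  show "0 < \<Delta> k / norm (g (x k))" using radius_pos norm_g_pos by simp
  show "0 \<le> \<alpha>C k" "\<alpha>C k \<le> \<Delta> k / norm (g (x k))" using cauchy by auto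
qed

lemma cauchy_step_pos: "0 < \<alpha>C k"
proof -
  have "0 < min (\<Delta> k / norm (g (x k))) (1 / \<kappa>B)" using radius_pos norm_g_pos \<kappa>B_pos by simp
  then show ?thesis using cauchy_step_ge[of k] by linarith
qed

lemma norm_sC: "norm (sC k) = \<alpha>C k * norm (g (x k))"
  using sC_def cauchy_step_pos[of k] by simp

lemma norm_sC_le: "norm (sC k) \<le> \<Delta> k"
  using cauchy[rule_format, of k] norm_g_pos[of k] by (simp add: norm_sC pos_le_divide_eq)

lemma norm_sC_ge: "min (\<Delta> k) (norm (g (x k)) / \<kappa>B) \<le> norm (sC k)"
proof -
  have "min (\<Delta> k / norm (g (x k))) (1 / \<kappa>B) * norm (g (x k)) \<le> \<alpha>C k * norm (g (x k))"
    using cauchy_step_ge[of k] norm_g_pos[of k] by (intro mult_right_mono) auto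
  then show ?thesis
    using norm_g_pos[of k] by (simp add: norm_sC min_mult_distrib_right)
qed

lemma sC_ne_0: "sC k \<noteq> 0"
  using norm_sC[of k] cauchy_step_pos[of k] norm_g_pos[of k] by auto

lemma sgn_sC: "sgn (sC k) = d (x k)"
proof -
  define ng where "ng = norm (g (x k))"
  have "g (x k) = - (ng *\<^sub>R d (x k))" using g_eq_scaled_d[of k] by (simp add: ng_def)
  then have "sC k = (\<alpha>C k * ng) *\<^sub>R d (x k)" using sC_def by simp
  moreover have "0 < \<alpha>C k * ng" using cauchy_step_pos[of k] norm_g_pos[of k] by (simp add: ng_def)
  moreover have "sgn (d (x k)) = d (x k)"
    using norm_d[of k] by (simp add: sgn_div_norm)
  ultimately show ?thesis by (simp add: sgn_scaleR)
qed

lemma model_decrease_along_d: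
  assumes "0 \<le> a" "a \<le> norm (sC k)"
  shows "a * norm (g (x k)) / 2 \<le> model_decrease k (a *\<^sub>R d (x k))"
proof -
  define t where "t = a / norm (g (x k))"
  have t: "0 \<le> t" "t \<le> \<alpha>C k"
    using assms norm_g_pos[of k] by (auto simp: t_def norm_sC pos_divide_le_eq)
  define ng where "ng = norm (g (x k))"
  have "g (x k) = - (ng *\<^sub>R d (x k))" using g_eq_scaled_d[of k] by (simp add: ng_def)
  then have "- (t *\<^sub>R g (x k)) = (t * ng) *\<^sub>R d (x k)" by simp
  then have "a *\<^sub>R d (x k) = - (t *\<^sub>R g (x k))"
    using norm_g_pos[of k] by (simp add: t_def ng_def)
  moreover have "t * (norm (g (x k)))\<^sup>2 / 2
      \<le> t * (norm (g (x k)))\<^sup>2 - t\<^sup>2 / 2 * (g (x k) \<bullet> (B k *v g (x k)))"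
    by (rule quadratic_argmax_ge_half_linear[OF _ _ _ cauchy_max t]) (use norm_g_pos cauchy in auto)
  moreover have "t * (norm (g (x k)))\<^sup>2 / 2 = a * norm (g (x k)) / 2"
    using norm_g_pos[of k] by (simp add: t_def power2_eq_square)
  ultimately show ?thesis by (simp add: model_decrease_along_g)
qed

definition uses_cauchy :: "nat \<Rightarrow> bool" where
  "uses_cauchy k \<longleftrightarrow> model_decrease k (safe_step Gs (x k) (s k) *\<^sub>R sgn (s k))
      < safe_step Gs (x k) (s k) / (2 * norm (s k)) * model_decrease k (s k)"

lemma ssel_eq: "ssel k = (if uses_cauchy k then sC k else s k)"
  using ssel_def by (simp add: uses_cauchy_def model_decrease_def)

lemma ssel_ne_0: "ssel k \<noteq> 0"
  using ssel_eq[of k] sC_ne_0 s_ne_0 by auto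

lemma norm_ssel_le: "norm (ssel k) \<le> \<Delta> k"
  using ssel_eq[of k] norm_sC_le s_tr by auto

lemma norm_sbar: "norm (sbar k) = 1"
  using sbar_def ssel_ne_0[of k] by (simp add: norm_sgn)

lemma Gs_sgn_ssel_pos: "0 < Gs (x k) (sgn (ssel k))"
  using Gs_pos ssel_ne_0[of k] by (simp add: norm_sgn)

lemma step_pos: "0 < \<alpha> k"
  using safe_step_pos[of Gs "x k" "ssel k", OF Gs_sgn_ssel_pos ssel_ne_0] \<alpha>_def by simp

lemma step_le_norm_ssel: "\<alpha> k \<le> norm (ssel k)"
  using safe_step_le_norm[of Gs "x k" "ssel k", OF Gs_sgn_ssel_pos ssel_ne_0] \<alpha>_def by simp

lemma step_le_radius: "\<alpha> k \<le> \<Delta> k"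
  using step_le_norm_ssel[of k] norm_ssel_le[of k] by linarith

lemma step_ge_min: "ereal e \<le> Gs (x k) (sbar k) \<Longrightarrow> min e (norm (ssel k)) \<le> \<alpha> k"
  using safe_step_ge_min[of Gs "x k" "ssel k", OF Gs_sgn_ssel_pos ssel_ne_0] \<alpha>_def sbar_def by simp

lemma uses_cauchy_sbar: "uses_cauchy k \<Longrightarrow> ssel k = sC k \<and> sbar k = d (x k)"
  using ssel_eq[of k] sbar_def sgn_sC by simp

lemma not_uses_cauchy_sbar: "\<not> uses_cauchy k \<Longrightarrow> ssel k = s k \<and> sbar k = sgn (s k)"
  using ssel_eq[of k] sbar_def by simp

lemma step_ratio_ge:
  assumes e': "0 < e'" "ereal e' \<le> Gs (x k) (sbar k)" and s: "\<not> uses_cauchy k"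
  shows "min (e' / radius_bound) 1 \<le> \<alpha> k / norm (s k)"
proof -
  define ns where "ns = norm (s k)"
  have ns: "0 < ns" "ns \<le> radius_bound"
    using s_ne_0[of k] s_tr radius_le_bound[of k] by (auto simp: ns_def intro: order_trans)
  have "min e' ns \<le> \<alpha> k" using step_ge_min[OF e'(2)] not_uses_cauchy_sbar[OF s] by (simp add: ns_def)
  then have "min e' ns / ns \<le> \<alpha> k / ns" using ns by (simp add: divide_right_mono)
  moreover have "min (e' / radius_bound) 1 \<le> min e' ns / ns"
  proof (cases "e' \<le> ns")
    case True
    have "e' / radius_bound \<le> e' / ns" using ns e' by (intro divide_left_mono) auto
    then show ?thesis using True by simp
  next
    case False
    then show ?thesis using ns by simp
  qed
  ultimately show ?thesis by (simp add: ns_def)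
qed

lemma model_decrease_step_cauchy:
  "uses_cauchy k \<Longrightarrow> \<alpha> k * norm (g (x k)) / 2 \<le> model_decrease k (\<alpha> k *\<^sub>R sbar k)"
  using uses_cauchy_sbar[of k] model_decrease_along_d[of "\<alpha> k" k] step_pos[of k] step_le_norm_ssel[of k]
  by simp

lemma model_decrease_step_s:
  "\<not> uses_cauchy k \<Longrightarrow> \<alpha> k / (2 * norm (s k)) * model_decrease k (s k) \<le> model_decrease k (\<alpha> k *\<^sub>R sbar k)"
  using not_uses_cauchy_sbar[of k] \<alpha>_def unfolding uses_cauchy_def by simp

lemma model_decrease_step_pos: "0 < model_decrease k (\<alpha> k *\<^sub>R sbar k)"
proof (cases "uses_cauchy k")
  case True
  have "0 < \<alpha> k * norm (g (x k)) / 2" using step_pos[of k] norm_g_pos[of k] by simp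
  then show ?thesis using model_decrease_step_cauchy[OF True] by linarith
next
  case False
  have "0 < \<alpha> k / (2 * norm (s k)) * model_decrease k (s k)"
    using step_pos[of k] s_ne_0[of k] model_decrease_s_pos[of k] by simp
  then show ?thesis using model_decrease_step_s[OF False] by linarith
qed

definition decrease :: "nat \<Rightarrow> real" where
  "decrease k = psi (x k) - psi (xt k)"

lemma step_cases:
  obtains (full) "\<eta>1 \<le> \<rho>1 k" "xt k = x k + s k" "decrease k = \<rho>1 k * model_decrease k (s k)"
  | (safeguarded) "\<rho>1 k < \<eta>1" "\<eta> \<le> \<rho>2 k" "xt k = x k + \<alpha> k *\<^sub>R sbar k"
      "decrease k = \<rho>2 k * model_decrease k (\<alpha> k *\<^sub>R sbar k)"
  | (rejected) "\<rho>1 k < \<eta>1" "\<rho>2 k < \<eta>" "xt k = x k" "decrease k = 0"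
proof -
  have \<rho>1: "psi (x k) - psi (x k + s k) = \<rho>1 k * model_decrease k (s k)"
    using \<rho>1_def model_decrease_s_pos[of k] by (simp add: model_decrease_def)
  have \<rho>2: "psi (x k) - psi (x k + \<alpha> k *\<^sub>R sbar k) = \<rho>2 k * model_decrease k (\<alpha> k *\<^sub>R sbar k)"
    using \<rho>2_def model_decrease_step_pos[of k] by (simp add: model_decrease_def)
  show ?thesis
    using update[rule_format, of k] that \<rho>1 \<rho>2
    by (cases "\<eta>1 \<le> \<rho>1 k"; cases "\<eta> \<le> \<rho>2 k") (auto simp: decrease_def)
qed

lemma decrease_nonneg: "0 \<le> decrease k"
  using params model_decrease_s_pos[of k] model_decrease_step_pos[of k]
  by (cases rule: step_cases[of k]) simp_all

lemma norm_xt_minus_le: "norm (xt k - x k) \<le> \<Delta> k"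
  using s_tr step_le_radius[of k] step_pos[of k] norm_sbar[of k] radius_pos[of k]
  by (cases rule: step_cases[of k]) simp_all

sublocale truncation "Gamma_min psi" S m T eps \<delta> \<kappa>
  using S0 S_nested trunc_i trunc_ii eps_pos eps_le by unfold_locales

definition trunc_move :: "nat \<Rightarrow> real" where
  "trunc_move k = \<kappa> * (counter_potential m eps (c (Suc k)) - counter_potential m eps (c k))"

lemma trunc_step_invariant:
  "(\<forall>i. c k i \<le> c (Suc k) i) \<and> level S m (xt k) \<le> level S m (x (Suc k))
    \<and> (\<forall>i. c (Suc k) i \<noteq> c k i \<longrightarrow> i < level S m (x (Suc k)))
    \<and> norm (x (Suc k) - xt k) \<le> trunc_move k"
  using trunc_loop_invariant[OF trunc_step[rule_format, of k]] by (simp add: trunc_move_def)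

lemma trunc_move_nonneg: "0 \<le> trunc_move k"
  using trunc_step_invariant[of k] counter_potential_mono[of "c k" "c (Suc k)"] \<kappa>_pos
  by (simp add: trunc_move_def)

lemma summable_trunc_move: "summable trunc_move"
proof (rule summableI_nonneg_bounded[OF trunc_move_nonneg])
  fix N
  have "(\<Sum>k<N. trunc_move k)
      = \<kappa> * (\<Sum>k<N. counter_potential m eps (c (Suc k)) - counter_potential m eps (c k))"
    by (simp add: trunc_move_def sum_distrib_left)
  also have "\<dots> = \<kappa> * (counter_potential m eps (c N) - counter_potential m eps (c 0))"
    using sum_lessThan_telescope[of "\<lambda>k. counter_potential m eps (c k)" N] by simp
  also have "\<dots> \<le> \<kappa> * (m * suminf eps)"
    using counter_potential_le_suminf[OF eps_summable, of "c N"] counter_potential_nonneg[of "c 0"] \<kappa>_pos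
    by (intro mult_left_mono) auto
  finally show "(\<Sum>k<N. trunc_move k) \<le> \<kappa> * (m * suminf eps)" .
qed

lemma psi_lipschitz_on_cball: obtains L where "L-lipschitz_on (cball 0 r) psi"
proof -
  obtain L1 where L1: "L1-lipschitz_on (cball 0 r) phi"
    using convex_on_lipschitz_on_cball[OF phi_convex] .
  have "bounded (gradf ` cball 0 r)"
    using gradf_cont by (intro compact_imp_bounded compact_continuous_image) (auto intro: continuous_on_subset)
  then obtain G where "\<forall>y\<in>cball 0 r. norm (gradf y) \<le> G"
    by (auto simp: bounded_iff)
  then have G: "norm (gradf y) \<le> G" if "y \<in> cball 0 r" for y
    using that by blast
  have "(max G 0)-lipschitz_on (cball 0 r) f"
  proof (rule bounded_derivative_imp_lipschitz)
    show "(f has_derivative (\<lambda>h. gradf y \<bullet> h)) (at y within cball 0 r)" for y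
      using f_deriv has_derivative_at_withinI by blast
    show "onorm (\<lambda>h. gradf y \<bullet> h) \<le> max G 0" if "y \<in> cball 0 r" for y
    proof (rule onorm_le)
      fix h
      have "norm (gradf y \<bullet> h) \<le> norm (gradf y) * norm h" by (simp add: Cauchy_Schwarz_ineq2)
      also have "\<dots> \<le> max G 0 * norm h" using G[OF that] by (intro mult_right_mono) auto
      finally show "norm (gradf y \<bullet> h) \<le> max G 0 * norm h" .
    qed
  qed auto
  from lipschitz_on_add[OF this L1] have "(max G 0 + L1)-lipschitz_on (cball 0 r) psi"
    by (simp add: psi_def)
  then show ?thesis by (rule that)
qed

lemma summable_decrease: "summable decrease"
proof -
  define Rb where "Rb = R + radius_bound + \<kappa> * (m * suminf eps)"
  obtain L where L: "L-lipschitz_on (cball 0 Rb) psi" using psi_lipschitz_on_cball .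
  obtain lb where lb: "\<And>y. lb \<le> psi y" using A1 by (auto simp: bdd_below_def)
  have step: "psi (x (Suc k)) \<le> psi (x k) - decrease k + L * trunc_move k" for k
  proof -
    have move: "norm (x (Suc k) - xt k) \<le> trunc_move k" using trunc_step_invariant[of k] by simp
    have "trunc_move k \<le> \<kappa> * (m * suminf eps)"
      using counter_potential_le_suminf[OF eps_summable, of "c (Suc k)"]
        counter_potential_nonneg[of "c k"] \<kappa>_pos
      by (simp add: trunc_move_def mult_left_mono)
    moreover have "norm (xt k) \<le> R + radius_bound"
      using norm_triangle_sub[of "xt k" "x k"] x_bounded norm_xt_minus_le[of k] radius_le_bound[of k]
      by (smt (verit) mem_ball_0)
    ultimately have "xt k \<in> cball 0 Rb" "x (Suc k) \<in> cball 0 Rb"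
      using move norm_triangle_sub[of "x (Suc k)" "xt k"] trunc_move_nonneg[of k] by (auto simp: Rb_def)
    then have "psi (x (Suc k)) - psi (xt k) \<le> L * norm (x (Suc k) - xt k)"
      using lipschitz_onD[OF L] by (force simp: dist_real_def dist_norm)
    also have "\<dots> \<le> L * trunc_move k"
      by (rule mult_left_mono[OF move lipschitz_on_nonneg[OF L]])
    finally show ?thesis by (simp add: decrease_def)
  qed
  have "(\<Sum>k<N. decrease k) \<le> psi (x 0) - psi (x N) + L * (\<Sum>k<N. trunc_move k)" for N
  proof (induction N)
    case (Suc N)
    then show ?case using step[of N] by (simp add: distrib_left)
  qed simp
  also have "\<dots> N \<le> psi (x 0) - lb + L * suminf trunc_move" for N
  proof -
    have "L * (\<Sum>k<N. trunc_move k) \<le> L * suminf trunc_move"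
      using sum_le_suminf[OF summable_trunc_move, of "{..<N}"] trunc_move_nonneg lipschitz_on_nonneg[OF L]
      by (intro mult_left_mono) auto
    then show ?thesis using lb[of "x N"] by linarith
  qed
  finally show ?thesis by (intro summableI_nonneg_bounded[OF decrease_nonneg])
qed

lemma psi_dir_quotient_tendsto:
  "((\<lambda>t. (psi (y + t *\<^sub>R v) - psi y) / t) \<longlongrightarrow> dir_deriv psi y v) (at_right 0)"
  using dir_quotient_tendsto_add_convex[OF f_deriv[rule_format, of y] phi_convex] by (simp add: psi_def)

lemma dir_deriv_lipschitz_at_iterates:
  obtains L where "\<And>k v w. norm v \<le> 1 \<Longrightarrow> norm w \<le> 1 \<Longrightarrow>
    \<bar>dir_deriv psi (x k) v - dir_deriv psi (x k) w\<bar> \<le> L * norm (v - w)"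
proof -
  obtain L where L: "L-lipschitz_on (cball 0 (R + 1)) psi" using psi_lipschitz_on_cball .
  have "ball (x k) 1 \<subseteq> cball 0 (R + 1)" for k
  proof
    fix z assume "z \<in> ball (x k) 1"
    then have "norm (z - x k) < 1" by (simp add: dist_norm norm_minus_commute)
    moreover have "norm (x k) < R" using x_bounded by simp
    ultimately show "z \<in> cball 0 (R + 1)" using norm_triangle_sub[of z "x k"] by simp
  qed
  then have "L-lipschitz_on (ball (x k) 1) psi" for k using L by (rule lipschitz_on_subset[rotated])
  then show ?thesis
    by (intro that dir_deriv_lipschitz[OF psi_dir_quotient_tendsto psi_dir_quotient_tendsto]) auto
qed

definition accepted :: "nat \<Rightarrow> bool" where
  "accepted k \<longleftrightarrow> \<not> (\<rho>1 k < \<eta>1 \<and> \<rho>2 k < \<eta>)"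

lemma rejected_step: "\<not> accepted k \<Longrightarrow> xt k = x k \<and> \<Delta> (Suc k) = r1 * \<Delta> k"
  using update[rule_format, of k] params by (auto simp: accepted_def)

lemma radius_nondecreasing: "\<Delta> k \<le> \<Delta>max \<Longrightarrow> \<eta>1 \<le> \<rho>2 k \<Longrightarrow> \<Delta> k \<le> \<Delta> (Suc k)"
  using update[rule_format, of k] params radius_pos[of k] by (auto simp: mult_le_cancel_right1)

lemma radius_step_ge: "0 < h \<Longrightarrow> h \<le> \<Delta>max \<Longrightarrow> h < \<Delta> k \<Longrightarrow> r1 * h \<le> \<Delta> (Suc k)"
proof -
  assume h: "0 < h" "h \<le> \<Delta>max" "h < \<Delta> k"
  have "r1 * h \<le> r1 * \<Delta> k" "r1 * h \<le> h" using params h by (auto intro: mult_left_le_one_le)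
  moreover have "1 * \<Delta> k \<le> r2 * \<Delta> k" using params radius_pos[of k] by (intro mult_right_mono) auto
  then have "h \<le> r2 * \<Delta> k" using h by linarith
  then have "h \<le> min \<Delta>max (r2 * \<Delta> k)" using h by simp
  ultimately show ?thesis using radius_cases[of k] h by (elim disjE) linarith+
qed

lemma eps_antimono: "i \<le> j \<Longrightarrow> eps j \<le> eps i"
  using lift_Suc_antimono_le[of eps] eps_decr by (simp add: less_imp_le)

lemma Gamma_x_Suc_ge: "ereal (eps (c (Suc k) (level S m (x (Suc k))))) \<le> Gamma_min psi (x (Suc k))"
  using trunc_loop_stop[OF trunc_step[rule_format, of k]] .

lemma rejected_keeps:
  assumes "\<not> accepted (Suc k)"
  shows "x (Suc (Suc k)) = x (Suc k)"
proof -
  have "trunc_loop (Gamma_min psi) S m T eps (c (Suc k)) (x (Suc k)) (c (Suc (Suc k))) (x (Suc (Suc k)))"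
    using trunc_step[rule_format, of "Suc k"] rejected_step[OF assms] by simp
  from trunc_loop_trivial[OF this Gamma_x_Suc_ge[of k]] show ?thesis by simp
qed

lemma frequently_accepted_Gamma_ge:
  assumes often: "\<And>K. \<exists>k\<ge>K. accepted k"
  shows "\<exists>N. \<forall>K. \<exists>k\<ge>K. accepted k \<and> ereal (eps N) \<le> Gamma_min psi (x k)"
proof -
  have "\<exists>N. \<forall>K. \<exists>k\<ge>K. c (Suc k) (level S m (x (Suc k))) \<le> N"
    by (rule frequently_counter_at_level_bounded[of c "\<lambda>k. level S m (x (Suc k))" m])
      (use trunc_step_invariant level_le in simp_all)
  then obtain N where N: "\<forall>K. \<exists>k\<ge>K. c (Suc k) (level S m (x (Suc k))) \<le> N" ..
  \<comment> \<open>Rejected iterations change neither the iterate nor the counters, so the next accepted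
    iteration starts from a point where Gamma is at least eps N.\<close>
  have "\<exists>k'\<ge>K. accepted k' \<and> ereal (eps N) \<le> Gamma_min psi (x k')" for K
  proof -
    obtain k where k: "k \<ge> K" "c (Suc k) (level S m (x (Suc k))) \<le> N" using N by blast
    have G: "ereal (eps N) \<le> Gamma_min psi (x (Suc k))"
      using Gamma_x_Suc_ge[of k] eps_antimono[OF k(2)] by (meson ereal_less_eq(3) order_trans)
    define k' where "k' = (LEAST j. Suc k \<le> j \<and> accepted j)"
    have k': "Suc k \<le> k'" "accepted k'"
      using LeastI_ex[of "\<lambda>j. Suc k \<le> j \<and> accepted j"] often[of "Suc k"] by (auto simp: k'_def)
    have "j \<le> k' \<Longrightarrow> x j = x (Suc k)" if "Suc k \<le> j" for j
      using that
    proof (induction j rule: dec_induct)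
      case (step j)
      then have "\<not> accepted j" using not_less_Least[of j "\<lambda>j. Suc k \<le> j \<and> accepted j"] by (auto simp: k'_def)
      moreover obtain j' where "j = Suc j'" using step(1) by (cases j) auto
      ultimately show ?case using rejected_keeps step by simp
    qed simp
    then have "x k' = x (Suc k)" using k'(1) by blast
    then show ?thesis using k' k(1) G by (intro exI[of _ k']) simp
  qed
  then show ?thesis by blast
qed

lemma inner_g_eq: "g (x k) \<bullet> v = - (norm (g (x k)) * (d (x k) \<bullet> v))"
proof -
  define ng where "ng = norm (g (x k))"
  have "g (x k) = - (ng *\<^sub>R d (x k))"
    using g_eq_scaled_d[of k] by (simp add: ng_def)
  then show ?thesis unfolding ng_def[symmetric] by simp
qed

lemma model_decrease_sC_ge_linear:
  assumes "0 \<le> a" "a \<le> \<Delta> k"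
  shows "a * norm (g (x k)) - a\<^sup>2 * \<kappa>B / 2 \<le> model_decrease k (sC k)"
proof -
  define ng gBg where "ng = norm (g (x k))" and "gBg = g (x k) \<bullet> (B k *v g (x k))"
  define t where "t = a / ng"
  have ng: "0 < ng" using norm_g_pos by (simp add: ng_def)
  have "t * ng\<^sup>2 - t\<^sup>2 / 2 * gBg \<le> model_decrease k (sC k)"
    using cauchy_max[of "a / ng" k] assms ng sC_def model_decrease_along_g[of k "\<alpha>C k"]
    by (simp add: t_def ng_def gBg_def divide_right_mono)
  moreover have "t\<^sup>2 / 2 * gBg \<le> t\<^sup>2 / 2 * (\<kappa>B * ng\<^sup>2)"
    using quadratic_B_le[of "g (x k)" k] by (intro mult_left_mono) (auto simp: gBg_def ng_def)
  moreover have "t\<^sup>2 / 2 * (\<kappa>B * ng\<^sup>2) = a\<^sup>2 * \<kappa>B / 2" "t * ng\<^sup>2 = a * ng"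
    using ng by (simp_all add: t_def power2_eq_square field_simps)
  ultimately show ?thesis unfolding ng_def[symmetric] by linarith
qed

lemma inner_d_s_ge:
  "(1 - ell (norm (s k))) * norm (s k) - (norm (s k))\<^sup>2 * \<kappa>B / norm (g (x k)) \<le> d (x k) \<bullet> s k"
proof -
  define ns ng l where "ns = norm (s k)" and "ng = norm (g (x k))" and "l = ell ns"
  have ng: "0 < ng" using norm_g_pos by (simp add: ng_def)
  have l: "0 \<le> l" "l \<le> 1/2" using ell_range s_ne_0[of k] by (auto simp: l_def ns_def)
  have "(1 - l) * (ns * ng - ns\<^sup>2 * \<kappa>B / 2) \<le> (1 - l) * model_decrease k (sC k)"
    using model_decrease_sC_ge_linear[of ns k] s_tr l by (intro mult_left_mono) (auto simp: ns_def ng_def)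
  also have "\<dots> \<le> model_decrease k (s k)"
    using s_dec2 by (simp add: model_decrease_def l_def ns_def)
  also have "\<dots> \<le> - (g (x k) \<bullet> s k) + ns\<^sup>2 * \<kappa>B / 2"
    using abs_le_D2[OF quadratic_B_le[of "s k" k]] by (simp add: model_decrease_eq ns_def mult.commute)
  also have "- (g (x k) \<bullet> s k) = ng * (d (x k) \<bullet> s k)"
    by (simp add: inner_g_eq ng_def)
  finally have "(1 - l) * (ns * ng - ns\<^sup>2 * \<kappa>B / 2) \<le> ng * (d (x k) \<bullet> s k) + ns\<^sup>2 * \<kappa>B / 2" .
  moreover have "(1 - l) * (ns * ng - ns\<^sup>2 * \<kappa>B / 2)
      = (1 - l) * ns * ng - ns\<^sup>2 * \<kappa>B / 2 + l * (ns\<^sup>2 * \<kappa>B) / 2"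
    by (simp add: field_simps)
  moreover have "0 \<le> l * (ns\<^sup>2 * \<kappa>B)" using l \<kappa>B_pos by simp
  ultimately have "(1 - l) * ns * ng - ns\<^sup>2 * \<kappa>B \<le> ng * (d (x k) \<bullet> s k)" by linarith
  then have "((1 - l) * ns - ns\<^sup>2 * \<kappa>B / ng) * ng \<le> (d (x k) \<bullet> s k) * ng"
    using ng by (simp add: algebra_simps)
  then show ?thesis using ng by (simp add: ns_def l_def ng_def)
qed

lemma model_decrease_step_le:
  "model_decrease k (\<alpha> k *\<^sub>R sbar k) \<le> \<alpha> k * norm (g (x k)) + \<kappa>B * (\<alpha> k)\<^sup>2 / 2"
proof -
  have "d (x k) \<bullet> sbar k \<le> 1"
    using Cauchy_Schwarz_ineq2[of "d (x k)" "sbar k"] norm_sbar[of k]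
      norm_d[of k] by simp
  then have "- (g (x k) \<bullet> (\<alpha> k *\<^sub>R sbar k)) \<le> \<alpha> k * norm (g (x k))"
    using step_pos[of k] norm_g_pos[of k] mult_left_le[of "d (x k) \<bullet> sbar k" "\<alpha> k * norm (g (x k))"]
    by (simp add: inner_g_eq mult_ac)
  moreover have "\<bar>(\<alpha> k *\<^sub>R sbar k) \<bullet> (B k *v (\<alpha> k *\<^sub>R sbar k))\<bar> \<le> \<kappa>B * (\<alpha> k)\<^sup>2"
    using quadratic_B_le[of "\<alpha> k *\<^sub>R sbar k" k] norm_sbar[of k] step_pos[of k] by simp
  ultimately show ?thesis by (simp add: model_decrease_eq)
qed

definition linearization_error :: "nat \<Rightarrow> real" where
  "linearization_error k = psi (x k + \<alpha> k *\<^sub>R sbar k) - psi (x k) - \<alpha> k * dir_deriv psi (x k) (sbar k)"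

end

section \<open>Cluster points are stationary\<close>

locale nonstationary_cluster_point = trust_region_run +
  fixes xs and kl :: "nat \<Rightarrow> nat" and r e :: real
  assumes kl_mono: "strict_mono kl" and kl_tendsto: "(\<lambda>l. x (kl l)) \<longlonglongrightarrow> xs"
    and r_pos: "0 < r" and e_pos: "0 < e" and norm_g_ge: "\<And>z. z \<in> ball xs r \<Longrightarrow> e \<le> norm (g z)"
begin

definition radius_factor :: real where
  "radius_factor = min 1 (\<gamma>2 * e / radius_bound)"

lemma radius_factor_pos: "0 < radius_factor" and radius_factor_le_1: "radius_factor \<le> 1"
  using params e_pos radius_pos[of 0] radius_le_bound[of 0] by (auto simp: radius_factor_def)

lemma min_radius_ge:
  assumes "x k \<in> ball xs r"
  shows "\<Delta> k * radius_factor \<le> min (\<Delta> k) (\<gamma>2 * norm (g (x k)))"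
proof -
  have "\<Delta> k * radius_factor \<le> \<Delta> k" using radius_pos[of k] radius_factor_le_1 by (simp add: mult_left_le)
  moreover have "\<Delta> k * radius_factor \<le> \<Delta> k * (\<gamma>2 * e / radius_bound)"
    using radius_pos[of k] by (intro mult_left_mono) (auto simp: radius_factor_def)
  moreover have "\<Delta> k * (\<gamma>2 * e / radius_bound) \<le> \<gamma>2 * e"
    using radius_le_bound[of k] radius_pos[of k] params e_pos
    by (simp add: divide_le_eq_1 mult_le_cancel_right1 field_simps)
  moreover have "\<gamma>2 * e \<le> \<gamma>2 * norm (g (x k))" using norm_g_ge[OF assms] params by simp
  ultimately show ?thesis by linarith
qed

lemma model_decrease_s_ge_near:
  assumes "x k \<in> ball xs r"
  shows "\<gamma>1 / 2 * e * (\<Delta> k * radius_factor) \<le> model_decrease k (s k)"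
proof -
  have "\<gamma>1 / 2 * e * (\<Delta> k * radius_factor)
      \<le> \<gamma>1 / 2 * norm (g (x k)) * min (\<Delta> k) (\<gamma>2 * norm (g (x k)))"
    using norm_g_ge[OF assms] min_radius_ge[OF assms] params e_pos radius_factor_pos radius_pos[of k]
    by (intro mult_mono) auto
  then show ?thesis using model_decrease_s_ge[of k] by linarith
qed

lemma model_decrease_step_ge_near:
  assumes "x k \<in> ball xs r"
  shows "\<alpha> k * min (e / 2) (\<gamma>1 * e * radius_factor / 4) \<le> model_decrease k (\<alpha> k *\<^sub>R sbar k)"
proof (cases "uses_cauchy k")
  case True
  have "\<alpha> k * min (e / 2) (\<gamma>1 * e * radius_factor / 4) \<le> \<alpha> k * norm (g (x k)) / 2"
    using step_pos[of k] norm_g_ge[OF assms] by (simp add: mult_left_mono)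
  then show ?thesis using model_decrease_step_cauchy[OF True] by linarith
next
  case False
  have ns: "0 < norm (s k)" "norm (s k) \<le> \<Delta> k" using s_ne_0[of k] s_tr by auto
  have "1 \<le> \<Delta> k / norm (s k)" using ns by simp
  then have "\<gamma>1 * e * radius_factor / 4 \<le> \<gamma>1 * e * radius_factor / 4 * (\<Delta> k / norm (s k))"
    using mult_left_mono[of 1 "\<Delta> k / norm (s k)" "\<gamma>1 * e * radius_factor / 4"] params e_pos
      radius_factor_pos by simp
  then have "min (e / 2) (\<gamma>1 * e * radius_factor / 4) \<le> \<gamma>1 * e * radius_factor / 4 * (\<Delta> k / norm (s k))"
    by (rule order_trans[OF min.cobounded2])
  then have "\<alpha> k * min (e / 2) (\<gamma>1 * e * radius_factor / 4)
      \<le> \<alpha> k * (\<gamma>1 * e * radius_factor / 4 * (\<Delta> k / norm (s k)))"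
    by (rule mult_left_mono[OF _ less_imp_le[OF step_pos]])
  also have "\<dots> = \<alpha> k / (2 * norm (s k)) * (\<gamma>1 / 2 * e * (\<Delta> k * radius_factor))"
    using ns by (simp add: field_simps)
  also have "\<dots> \<le> \<alpha> k / (2 * norm (s k)) * model_decrease k (s k)"
    using model_decrease_s_ge_near[OF assms] step_pos[of k] ns by (intro mult_left_mono) auto
  finally show ?thesis using model_decrease_step_s[OF False] by linarith
qed

definition move_factor :: real where
  "move_factor = min (\<eta>1 * (\<gamma>1 / 2 * e * radius_factor)) (\<eta> * min (e / 2) (\<gamma>1 * e * radius_factor / 4))"

lemma move_factor_pos: "0 < move_factor"
  using params e_pos radius_factor_pos by (simp add: move_factor_def)

lemma move_le_decrease_near:
  assumes "x k \<in> ball xs r"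
  shows "move_factor * norm (xt k - x k) \<le> decrease k"
proof (cases rule: step_cases[of k])
  case full
  have "move_factor * norm (xt k - x k) \<le> (\<eta>1 * (\<gamma>1 / 2 * e * radius_factor)) * \<Delta> k"
    using full(2) s_tr move_factor_pos by (intro mult_mono) (auto simp: move_factor_def)
  also have "\<dots> \<le> \<eta>1 * model_decrease k (s k)"
    using model_decrease_s_ge_near[OF assms] params by (simp add: mult_left_mono mult_ac)
  also have "\<dots> \<le> decrease k"
    using full(1,3) model_decrease_s_pos[of k] by (simp add: mult_right_mono)
  finally show ?thesis .
next
  case safeguarded
  have "norm (xt k - x k) = \<alpha> k" using safeguarded(3) norm_sbar[of k] step_pos[of k] by simp
  then have "move_factor * norm (xt k - x k) \<le> \<eta> * (\<alpha> k * min (e / 2) (\<gamma>1 * e * radius_factor / 4))"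
    using step_pos[of k] by (simp add: move_factor_def mult_right_mono mult_ac)
  also have "\<dots> \<le> \<eta> * model_decrease k (\<alpha> k *\<^sub>R sbar k)"
    using model_decrease_step_ge_near[OF assms] params by (intro mult_left_mono) auto
  also have "\<dots> \<le> decrease k"
    using safeguarded(2,4) model_decrease_step_pos[of k] by (simp add: mult_right_mono)
  finally show ?thesis .
next
  case rejected
  then show ?thesis by simp
qed

lemma x_tendsto: "x \<longlonglongrightarrow> xs"
proof (rule tendsto_if_subseq_tendsto_and_summable_local_steps[OF _ _ r_pos _ kl_mono kl_tendsto])
  show "summable (\<lambda>k. decrease k / move_factor + trunc_move k)"
    by (intro summable_add summable_divide summable_decrease summable_trunc_move)
  show "0 \<le> decrease k / move_factor + trunc_move k" for k
    using decrease_nonneg[of k] move_factor_pos trunc_move_nonneg[of k] by simp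
  show "norm (x (Suc k) - x k) \<le> decrease k / move_factor + trunc_move k" if "x k \<in> ball xs r" for k
  proof -
    have "norm (x (Suc k) - x k) \<le> norm (x (Suc k) - xt k) + norm (xt k - x k)"
      using norm_triangle_ineq[of "x (Suc k) - xt k" "xt k - x k"] by simp
    moreover have "norm (xt k - x k) \<le> decrease k / move_factor"
      using move_le_decrease_near[OF that] move_factor_pos by (simp add: pos_le_divide_eq mult.commute)
    ultimately show ?thesis using trunc_step_invariant[of k] by simp
  qed
qed

lemma eventually_near: "\<forall>\<^sub>F k in sequentially. x k \<in> ball xs r"
  using tendstoD[OF x_tendsto r_pos] by (simp add: dist_commute)

lemma angle_near:
  assumes "x k \<in> ball xs r"
  shows "(norm (sbar k - d (x k)))\<^sup>2 \<le> 2 * ell (norm (s k)) + 2 * (norm (s k) * \<kappa>B / e)"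
proof (cases "uses_cauchy k")
  case True
  then show ?thesis
    using uses_cauchy_sbar[of k] ell_range s_ne_0[of k] \<kappa>B_pos e_pos by simp
next
  case False
  define ns where "ns = norm (s k)"
  have ns: "0 < ns" using s_ne_0[of k] by (simp add: ns_def)
  have "ns\<^sup>2 * \<kappa>B / norm (g (x k)) \<le> ns\<^sup>2 * \<kappa>B / e"
    using norm_g_ge[OF assms] norm_g_pos[of k] e_pos \<kappa>B_pos by (intro divide_left_mono) auto
  then have "(1 - ell ns) * ns - ns\<^sup>2 * \<kappa>B / e \<le> d (x k) \<bullet> s k"
    using inner_d_s_ge[of k] by (simp add: ns_def)
  then have "((1 - ell ns) * ns - ns\<^sup>2 * \<kappa>B / e) / ns \<le> (d (x k) \<bullet> s k) / ns"
    using ns by (rule divide_right_mono[OF _ less_imp_le])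
  also have "(d (x k) \<bullet> s k) / ns = d (x k) \<bullet> sbar k"
    using not_uses_cauchy_sbar[OF False] by (simp add: sgn_div_norm ns_def divide_inverse_commute)
  finally have "((1 - ell ns) * ns - ns\<^sup>2 * \<kappa>B / e) / ns \<le> d (x k) \<bullet> sbar k" .
  moreover have "((1 - ell ns) * ns - ns\<^sup>2 * \<kappa>B / e) / ns = 1 - ell ns - ns * \<kappa>B / e"
    using ns by (simp add: power2_eq_square field_simps)
  moreover have "(norm (sbar k - d (x k)))\<^sup>2 = 2 - 2 * (d (x k) \<bullet> sbar k)"
    using norm_sbar[of k] norm_d[of k]
    by (simp add: power2_norm_eq_inner inner_diff_left inner_diff_right inner_commute)
      (simp add: dot_square_norm)
  ultimately show ?thesis by (simp add: ns_def)
qed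

lemma rho2_small_near:
  assumes near: "x k \<in> ball xs r" and fail: "\<rho>2 k < \<eta>1"
    and L: "\<And>v w. norm v \<le> 1 \<Longrightarrow> norm w \<le> 1 \<Longrightarrow>
      \<bar>dir_deriv psi (x k) v - dir_deriv psi (x k) w\<bar> \<le> L * norm (v - w)"
  shows "(1 - \<eta>1) * e < L * norm (sbar k - d (x k)) + \<bar>linearization_error k\<bar> / \<alpha> k + \<alpha> k * \<kappa>B"
proof -
  define a ng z where "a = \<alpha> k" and "ng = norm (g (x k))" and "z = norm (sbar k - d (x k))"
  have a: "0 < a" using step_pos by (simp add: a_def)
  have ng: "e \<le> ng" using norm_g_ge[OF near] by (simp add: ng_def)
  have "dir_deriv psi (x k) (sbar k) \<le> - ng + L * z"
    using L[of "sbar k" "d (x k)"] norm_sbar[of k] norm_d[of k] dir_deriv_d_le[of k]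
    by (simp add: z_def ng_def)
  then have "a * dir_deriv psi (x k) (sbar k) \<le> a * (- ng + L * z)"
    using a by (intro mult_left_mono) auto
  then have "a * dir_deriv psi (x k) (sbar k) \<le> - (a * ng) + a * L * z"
    by (simp add: algebra_simps)
  moreover have "\<rho>2 k * model_decrease k (a *\<^sub>R sbar k)
      = - (a * dir_deriv psi (x k) (sbar k)) - linearization_error k"
    using \<rho>2_def[rule_format, of k] model_decrease_step_pos[of k]
    by (simp add: model_decrease_def linearization_error_def a_def)
  ultimately have "a * ng - a * L * z - \<bar>linearization_error k\<bar> \<le> \<rho>2 k * model_decrease k (a *\<^sub>R sbar k)"
    using abs_ge_self[of "linearization_error k"] by linarith
  also have "\<dots> < \<eta>1 * model_decrease k (a *\<^sub>R sbar k)"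
    using fail model_decrease_step_pos[of k] by (simp add: a_def)
  also have "\<dots> \<le> \<eta>1 * (a * ng + \<kappa>B * a\<^sup>2 / 2)"
    using model_decrease_step_le[of k] params by (intro mult_left_mono) (auto simp: a_def ng_def)
  also have "\<dots> \<le> \<eta>1 * (a * ng) + \<kappa>B * a\<^sup>2"
  proof -
    have "\<eta>1 * (\<kappa>B * a\<^sup>2 / 2) \<le> \<kappa>B * a\<^sup>2 / 2"
      by (rule mult_left_le_one_le) (use params \<kappa>B_pos in auto)
    moreover have "0 \<le> \<kappa>B * a\<^sup>2" using \<kappa>B_pos by simp
    ultimately show ?thesis unfolding distrib_left by linarith
  qed
  finally have "a * ((1 - \<eta>1) * ng) < a * (L * z + \<bar>linearization_error k\<bar> / a + a * \<kappa>B)"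
    using a by (simp add: algebra_simps power2_eq_square)
  then have "(1 - \<eta>1) * ng < L * z + \<bar>linearization_error k\<bar> / a + a * \<kappa>B" using a by simp
  moreover have "(1 - \<eta>1) * e \<le> (1 - \<eta>1) * ng" using ng params by (intro mult_left_mono) auto
  ultimately show ?thesis by (simp add: a_def z_def)
qed

lemma angle_tendsto_0:
  assumes \<Delta>q: "(\<lambda>l. \<Delta> (q l)) \<longlonglongrightarrow> 0" and near: "\<And>l. x (q l) \<in> ball xs r"
  shows "(\<lambda>l. norm (sbar (q l) - d (x (q l)))) \<longlonglongrightarrow> 0"
proof -
  have ns: "(\<lambda>l. norm (s (q l))) \<longlonglongrightarrow> 0"
    by (rule tendsto_sandwich[OF _ _ tendsto_const \<Delta>q]) (use s_tr in auto)
  then have "filterlim (\<lambda>l. norm (s (q l))) (at_right 0) sequentially"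
    by (rule tendsto_imp_filterlim_at_right) (use s_ne_0 in auto)
  then have "(\<lambda>l. ell (norm (s (q l)))) \<longlonglongrightarrow> 0" by (rule filterlim_compose[OF ell_lim])
  then have "(\<lambda>l. 2 * ell (norm (s (q l))) + 2 * (norm (s (q l)) * \<kappa>B / e))
      \<longlonglongrightarrow> 2 * 0 + 2 * (0 * \<kappa>B / e)"
    by (intro tendsto_add tendsto_mult_left tendsto_divide tendsto_mult ns tendsto_const) (use e_pos in auto)
  then have bound: "(\<lambda>l. sqrt (2 * ell (norm (s (q l))) + 2 * (norm (s (q l)) * \<kappa>B / e))) \<longlonglongrightarrow> 0"
    using tendsto_real_sqrt by fastforce
  show ?thesis
    by (rule tendsto_sandwich[OF _ _ tendsto_const bound])
      (use angle_near[OF near] in \<open>auto intro!: always_eventually real_le_rsqrt\<close>)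
qed

lemma small_radius_failures_absurd:
  assumes q: "strict_mono q" and \<Delta>q: "(\<lambda>l. \<Delta> (q l)) \<longlonglongrightarrow> 0"
    and near: "\<And>l. x (q l) \<in> ball xs r" and fail: "\<And>l. \<rho>2 (q l) < \<eta>1"
  shows False
proof -
  obtain L where L: "\<And>k v w. norm v \<le> 1 \<Longrightarrow> norm w \<le> 1 \<Longrightarrow>
      \<bar>dir_deriv psi (x k) v - dir_deriv psi (x k) w\<bar> \<le> L * norm (v - w)"
    using dir_deriv_lipschitz_at_iterates by blast
  have \<alpha>q: "(\<lambda>l. \<alpha> (q l)) \<longlonglongrightarrow> 0"
    by (rule tendsto_sandwich[OF _ _ tendsto_const \<Delta>q])
      (use step_pos step_le_radius in \<open>auto intro!: always_eventually less_imp_le\<close>)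
  have "convergent (\<lambda>l. x (q l))"
    using LIMSEQ_subseq_LIMSEQ[OF x_tendsto q] by (auto simp: convergent_def o_def)
  then have err: "(\<lambda>l. linearization_error (q l)) \<in> o(\<lambda>l. \<alpha> (q l))"
    using B3 q \<alpha>q by (simp add: linearization_error_def)
  define c where "c = (1 - \<eta>1) * e"
  have c: "0 < c" using params e_pos by (simp add: c_def)
  have "\<forall>\<^sub>F l in sequentially. norm (linearization_error (q l)) \<le> c / 4 * norm (\<alpha> (q l))"
    using landau_o.smallD[OF err, of "c / 4"] c by simp
  moreover have "\<forall>\<^sub>F l in sequentially. L * norm (sbar (q l) - d (x (q l))) < c / 4"
    by (rule order_tendstoD(2)[OF tendsto_mult_left[OF angle_tendsto_0[OF \<Delta>q near]]]) (use c in simp)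
  moreover have "\<forall>\<^sub>F l in sequentially. \<alpha> (q l) * \<kappa>B < c / 4"
    by (rule order_tendstoD(2)[OF tendsto_mult_right[OF \<alpha>q]]) (use c in simp)
  ultimately have "\<forall>\<^sub>F l in sequentially. False"
  proof eventually_elim
    case (elim l)
    have "\<bar>linearization_error (q l)\<bar> / \<alpha> (q l) \<le> c / 4"
      using elim(1) step_pos[of "q l"] by (simp add: pos_divide_le_eq)
    moreover have "c < L * norm (sbar (q l) - d (x (q l))) + \<bar>linearization_error (q l)\<bar> / \<alpha> (q l)
        + \<alpha> (q l) * \<kappa>B"
      unfolding c_def by (rule rho2_small_near[OF near fail]) (rule L)
    ultimately show False using elim(2,3) c by linarith
  qed
  then show False by simp
qed

lemma eventually_rho2_ge_if_small_radius: "\<exists>h>0. \<exists>K. \<forall>k\<ge>K. \<Delta> k \<le> h \<longrightarrow> \<eta>1 \<le> \<rho>2 k"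
proof (rule ccontr)
  assume "\<not> ?thesis"
  then have often: "\<forall>h>0. \<forall>K. \<exists>k\<ge>K. \<Delta> k \<le> h \<and> \<rho>2 k < \<eta>1" by (auto simp: not_le)
  obtain Kb where Kb: "\<And>k. k \<ge> Kb \<Longrightarrow> x k \<in> ball xs r"
    using eventually_near by (auto simp: eventually_sequentially)
  have "\<exists>k\<ge>K. \<Delta> k \<le> 1 / (real n + 1) \<and> \<rho>2 k < \<eta>1 \<and> Kb \<le> k" for n K
    using often[rule_format, of "1 / (real n + 1)" "max K Kb"] by auto
  then obtain q :: "nat \<Rightarrow> nat" where q: "strict_mono q"
    and Pq: "\<And>n. \<Delta> (q n) \<le> 1 / (real n + 1) \<and> \<rho>2 (q n) < \<eta>1 \<and> Kb \<le> q n"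
    using strict_mono_subseq_choice[of "\<lambda>n k. \<Delta> k \<le> 1 / (real n + 1) \<and> \<rho>2 k < \<eta>1 \<and> Kb \<le> k"]
    by blast
  have lim: "(\<lambda>n. 1 / (real n + 1)) \<longlonglongrightarrow> 0"
    using LIMSEQ_inverse_real_of_nat by (simp add: divide_inverse add.commute)
  have "(\<lambda>n. \<Delta> (q n)) \<longlonglongrightarrow> 0"
    by (rule tendsto_sandwich[OF _ _ tendsto_const lim])
      (use Pq radius_pos in \<open>auto intro!: always_eventually less_imp_le\<close>)
  then show False
    using small_radius_failures_absurd[OF q] Pq Kb by blast
qed

lemma radius_eventually_ge: "\<exists>D>0. \<exists>K. \<forall>k\<ge>K. D \<le> \<Delta> k"
proof -
  obtain h K where h: "0 < h" and hK: "\<And>k. k \<ge> K \<Longrightarrow> \<Delta> k \<le> h \<Longrightarrow> \<eta>1 \<le> \<rho>2 k"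
    using eventually_rho2_ge_if_small_radius by blast
  define h' where "h' = min h \<Delta>max"
  have h': "0 < h'" "h' \<le> h" "h' \<le> \<Delta>max" using h params by (auto simp: h'_def)
  have "min (\<Delta> K) (r1 * h') \<le> \<Delta> k" if "k \<ge> K" for k
  proof (rule eventually_ge_min_if_nondecreasing_below[OF _ _ that])
    show "\<Delta> k \<le> \<Delta> (Suc k)" if "K \<le> k" "\<Delta> k \<le> h'" for k
      using that h' by (intro radius_nondecreasing hK) auto
    show "r1 * h' \<le> \<Delta> (Suc k)" if "K \<le> k" "h' < \<Delta> k" for k
      using that h' by (intro radius_step_ge) auto
  qed
  moreover have "0 < min (\<Delta> K) (r1 * h')" using radius_pos[of K] params h' by simp
  ultimately show ?thesis by blast
qed

lemma frequently_accepted: "\<exists>k\<ge>K. accepted k"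
proof (rule ccontr)
  assume "\<not> ?thesis"
  then have rej: "\<not> accepted k" if "K \<le> k" for k using that by auto
  have \<Delta>K: "\<Delta> (K + n) = r1 ^ n * \<Delta> K" for n
  proof (induction n)
    case (Suc n)
    then show ?case using rejected_step[OF rej[of "K + n"]] by simp
  qed simp
  obtain D K' where D: "0 < D" "\<And>k. k \<ge> K' \<Longrightarrow> D \<le> \<Delta> k"
    using radius_eventually_ge by blast
  have "(\<lambda>n. r1 ^ n * \<Delta> K) \<longlonglongrightarrow> 0 * \<Delta> K"
    using params by (intro tendsto_mult LIMSEQ_power_zero tendsto_const) auto
  then obtain n0 where n0: "\<And>n. n \<ge> n0 \<Longrightarrow> r1 ^ n * \<Delta> K < D"
    using order_tendstoD(2)[of _ "0 * \<Delta> K" sequentially D] D(1) by (auto simp: eventually_sequentially)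
  have "\<Delta> (K + (n0 + K')) < D" using \<Delta>K n0[of "n0 + K'"] by simp
  moreover have "D \<le> \<Delta> (K + (n0 + K'))" using D(2) by simp
  ultimately show False by simp
qed

definition step_floor :: "real \<Rightarrow> real \<Rightarrow> real" where
  "step_floor D e' = min (min e' (min D (e / \<kappa>B)) * e / 2)
     (min (e' / radius_bound) 1 / 2 * (\<gamma>1 / 2 * e * (D * radius_factor)))"

lemma model_decrease_step_ge_far:
  assumes near: "x k \<in> ball xs r" and D: "0 < D" "D \<le> \<Delta> k"
    and e': "0 < e'" "ereal e' \<le> Gs (x k) (sbar k)"
  shows "step_floor D e' \<le> model_decrease k (\<alpha> k *\<^sub>R sbar k)"
proof (cases "uses_cauchy k")
  case True
  have "e / \<kappa>B \<le> norm (g (x k)) / \<kappa>B"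
    using norm_g_ge[OF near] \<kappa>B_pos by (intro divide_right_mono) auto
  then have "min D (e / \<kappa>B) \<le> min (\<Delta> k) (norm (g (x k)) / \<kappa>B)"
    using D by (auto simp: min_def)
  then have "min D (e / \<kappa>B) \<le> norm (ssel k)"
    using order_trans[OF _ norm_sC_ge[of k]] uses_cauchy_sbar[OF True] by simp
  then have "min e' (min D (e / \<kappa>B)) \<le> min e' (norm (ssel k))" by (rule min.mono[OF order_refl])
  then have "min e' (min D (e / \<kappa>B)) \<le> \<alpha> k" using step_ge_min[OF e'(2)] by (rule order_trans)
  then have "min e' (min D (e / \<kappa>B)) * e / 2 \<le> \<alpha> k * norm (g (x k)) / 2"
    using norm_g_ge[OF near] e' D e_pos \<kappa>B_pos step_pos[of k] by (intro divide_right_mono mult_mono) auto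
  then have "min e' (min D (e / \<kappa>B)) * e / 2 \<le> model_decrease k (\<alpha> k *\<^sub>R sbar k)"
    using model_decrease_step_cauchy[OF True] by (rule order_trans)
  then show ?thesis unfolding step_floor_def by (rule order_trans[OF min.cobounded1])
next
  case False
  define ns where "ns = norm (s k)"
  have ns: "0 < ns" using s_ne_0[of k] by (simp add: ns_def)
  have "min (e' / radius_bound) 1 \<le> \<alpha> k / ns" using step_ratio_ge[OF e' False] by (simp add: ns_def)
  then have "min (e' / radius_bound) 1 / 2 \<le> \<alpha> k / (2 * ns)" by simp
  moreover have "\<gamma>1 / 2 * e * (D * radius_factor) \<le> \<gamma>1 / 2 * e * (\<Delta> k * radius_factor)"
    using D params e_pos radius_factor_pos by (intro mult_left_mono mult_right_mono) auto
  then have "\<gamma>1 / 2 * e * (D * radius_factor) \<le> model_decrease k (s k)"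
    using model_decrease_s_ge_near[OF near] by (rule order_trans)
  ultimately have "min (e' / radius_bound) 1 / 2 * (\<gamma>1 / 2 * e * (D * radius_factor))
      \<le> \<alpha> k / (2 * ns) * model_decrease k (s k)"
    using params e_pos D radius_factor_pos e' step_pos[of k] ns by (intro mult_mono) auto
  then have "min (e' / radius_bound) 1 / 2 * (\<gamma>1 / 2 * e * (D * radius_factor))
      \<le> model_decrease k (\<alpha> k *\<^sub>R sbar k)"
    using model_decrease_step_s[OF False] unfolding ns_def by (rule order_trans)
  then show ?thesis unfolding step_floor_def by (rule order_trans[OF min.cobounded2])
qed

definition decrease_floor :: "real \<Rightarrow> real \<Rightarrow> real" where
  "decrease_floor D e' = min (\<eta>1 * (\<gamma>1 / 2 * e * (D * radius_factor))) (\<eta> * step_floor D e')"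

lemma decrease_floor_pos: "0 < D \<Longrightarrow> 0 < e' \<Longrightarrow> 0 < decrease_floor D e'"
  using params e_pos radius_factor_pos \<kappa>B_pos radius_pos[of 0] radius_le_bound[of 0]
  by (simp add: decrease_floor_def step_floor_def)

lemma accepted_decrease_ge:
  assumes near: "x k \<in> ball xs r" and D: "0 < D" "D \<le> \<Delta> k"
    and e': "0 < e'" "ereal e' \<le> Gs (x k) (sbar k)" and acc: "accepted k"
  shows "decrease_floor D e' \<le> decrease k"
proof (cases rule: step_cases[of k])
  case full
  have "\<eta>1 * (\<gamma>1 / 2 * e * (D * radius_factor)) \<le> \<eta>1 * (\<gamma>1 / 2 * e * (\<Delta> k * radius_factor))"
    using D params e_pos radius_factor_pos by (intro mult_left_mono mult_right_mono) auto
  then have "decrease_floor D e' \<le> \<eta>1 * (\<gamma>1 / 2 * e * (\<Delta> k * radius_factor))"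
    unfolding decrease_floor_def by (rule order_trans[OF min.cobounded1])
  also have "\<dots> \<le> \<eta>1 * model_decrease k (s k)"
    using model_decrease_s_ge_near[OF near] params by (intro mult_left_mono) auto
  also have "\<dots> \<le> decrease k"
    using full(1,3) model_decrease_s_pos[of k] by (simp add: mult_right_mono)
  finally show ?thesis .
next
  case safeguarded
  have "\<eta> * step_floor D e' \<le> \<eta> * model_decrease k (\<alpha> k *\<^sub>R sbar k)"
    using model_decrease_step_ge_far[OF near D e'] params by (intro mult_left_mono) auto
  then have "decrease_floor D e' \<le> \<eta> * model_decrease k (\<alpha> k *\<^sub>R sbar k)"
    unfolding decrease_floor_def by (rule order_trans[OF min.cobounded2])
  also have "\<dots> \<le> decrease k"
    using safeguarded(2,4) model_decrease_step_pos[of k] by (simp add: mult_right_mono)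
  finally show ?thesis .
next
  case rejected
  then show ?thesis using acc by (simp add: accepted_def)
qed

text \<open>Infinitely many accepted iterations start where Gamma is bounded below, and each of them
  decreases psi by at least a fixed amount: this contradicts the summability of the decreases.\<close>

lemma absurd: False
proof -
  obtain N where N: "\<forall>K. \<exists>k\<ge>K. accepted k \<and> ereal (eps N) \<le> Gamma_min psi (x k)"
    using frequently_accepted_Gamma_ge frequently_accepted by blast
  obtain e' where e': "0 < e'" "\<And>k. ereal (eps N) \<le> Gamma_min psi (x k) \<Longrightarrow> ereal e' \<le> Gs (x k) (sbar k)"
    using B4 eps_pos by blast
  obtain D K1 where D: "0 < D" "\<And>k. k \<ge> K1 \<Longrightarrow> D \<le> \<Delta> k"
    using radius_eventually_ge by blast
  obtain K2 where near: "\<And>k. k \<ge> K2 \<Longrightarrow> x k \<in> ball xs r"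
    using eventually_near by (auto simp: eventually_sequentially)
  have "decrease \<longlonglongrightarrow> 0" by (rule summable_LIMSEQ_zero[OF summable_decrease])
  then obtain K3 where K3: "\<And>k. k \<ge> K3 \<Longrightarrow> decrease k < decrease_floor D e'"
    using order_tendstoD(2)[of decrease 0 sequentially "decrease_floor D e'"] decrease_floor_pos[OF D(1) e'(1)]
    by (auto simp: eventually_sequentially)
  obtain k where k: "k \<ge> max K1 (max K2 K3)" "accepted k" "ereal (eps N) \<le> Gamma_min psi (x k)"
    using N by blast
  have "decrease_floor D e' \<le> decrease k"
    using accepted_decrease_ge[OF near D(1) D(2) e'(1) e'(2)[OF k(3)] k(2)] k(1) by simp
  then show False using K3[of k] k(1) by simp
qed

end

context trust_region_run
begin

lemma cluster_point_stationary:
  assumes kl: "strict_mono kl" "(x \<circ> kl) \<longlonglongrightarrow> xs"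
  shows "stationary gradf phi xs"
proof (rule ccontr)
  assume "\<not> stationary gradf phi xs"
  then have "g xs \<noteq> 0" using g_eq_0_iff_stationary by simp
  then obtain r e where r: "0 < r" and e: "0 < e" and g: "\<And>z. z \<in> ball xs r \<Longrightarrow> e \<le> norm (g z)"
    using A2 by blast
  have "(\<lambda>l. x (kl l)) \<longlonglongrightarrow> xs" using kl(2) by (simp add: o_def)
  from nonstationary_cluster_point_axioms.intro[OF kl(1) this r e g]
  show False by (rule nonstationary_cluster_point.absurd[OF nonstationary_cluster_point.intro[OF trust_region_run_axioms]])
qed

lemma Fnat_tendsto_0:
  assumes L: "sym_posdef L"
  shows "(\<lambda>k. norm (Fnat L gradf phi (x k))) \<longlonglongrightarrow> 0"
proof -
  have "bounded (range x)" using x_bounded by (auto simp: bounded_iff intro: less_imp_le)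
  then have "(\<lambda>k. Fnat L gradf phi (x k)) \<longlonglongrightarrow> 0"
    using continuous_on_Fnat[OF L phi_convex gradf_cont]
      Fnat_eq_0_if_stationary[OF L phi_convex cluster_point_stationary]
    by (rule tendsto_zero_if_zero_at_cluster_points)
  then show ?thesis by (rule tendsto_norm_zero)
qed

end

theorem theorem4p11:
  fixes f phi psi :: "real^'n \<Rightarrow> real" and gradf :: "real^'n \<Rightarrow> real^'n"
    and u :: "real^'n \<Rightarrow> real" and d g :: "real^'n \<Rightarrow> real^'n"
    and Gs :: "real^'n \<Rightarrow> real^'n \<Rightarrow> ereal"
    and S :: "nat \<Rightarrow> (real^'n) set" and m :: nat and \<delta> :: ereal and \<kappa> :: real
    and T :: "real^'n \<Rightarrow> real \<Rightarrow> real^'n"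
    and \<eta> \<eta>1 \<eta>2 r1 r2 \<Delta>max \<gamma>1 \<gamma>2 :: real and eps :: "nat \<Rightarrow> real" and ell :: "real \<Rightarrow> real"
    and x xt s sC ssel sbar :: "nat \<Rightarrow> real^'n" and B :: "nat \<Rightarrow> real^'n^'n"
    and \<Delta> \<alpha>C \<rho>1 \<rho>2 \<alpha> :: "nat \<Rightarrow> real" and c :: "nat \<Rightarrow> nat \<Rightarrow> nat"
  assumes
    f_deriv: "\<forall>y. (f has_derivative (\<lambda>h. gradf y \<bullet> h)) (at y)"
    and gradf_cont: "continuous_on UNIV gradf"
    and phi_convex: "convex_on UNIV phi"
    and psi_def: "psi = (\<lambda>y. f y + phi y)"
    and g_def: "g = (\<lambda>y. u y *\<^sub>R d y)"
    and pg_nonstat: "\<forall>y. \<not> stationary gradf phi y \<longrightarrow>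
         norm (d y) = 1 \<and> dir_deriv psi y (d y) < 0 \<and> dir_deriv psi y (d y) \<le> u y \<and> u y < 0"
    and pg_stat: "\<forall>y. stationary gradf phi y \<longrightarrow> d y = 0 \<and> u y = 0"
    and Gs_pos: "\<forall>y v. norm v = 1 \<longrightarrow> Gs y v > 0"
    and S0: "S 0 = UNIV"
    and S_nested: "\<forall>i<m. S (Suc i) \<subseteq> S i"
    and \<delta>_pos: "\<delta> > 0"
    and \<kappa>_pos: "\<kappa> > 0"
    and trunc_i: "\<forall>y\<in>S m. Gamma_min psi y \<ge> \<delta>"
    and trunc_ii: "\<forall>a i y. 0 < a \<and> ereal a \<le> \<delta> \<and> i < m \<and> y \<in> S i - S (Suc i) \<longrightarrow>
         (Gamma_min psi y \<ge> ereal a \<longrightarrow> T y a = y) \<and>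
         (Gamma_min psi y < ereal a \<longrightarrow> T y a \<in> S (Suc i) \<and> Gamma_min psi (T y a) \<ge> ereal a
                                     \<and> norm (T y a - y) \<le> \<kappa> * a)"
    and params: "0 < \<eta> \<and> \<eta> < \<eta>1 \<and> \<eta>1 < \<eta>2 \<and> \<eta>2 < 1 \<and> 0 < r1 \<and> r1 < 1 \<and> 1 < r2
                 \<and> \<Delta>max > 0 \<and> \<gamma>1 > 0 \<and> \<gamma>2 > 0"
    and eps_pos: "\<forall>j. eps j > 0"
    and eps_decr: "\<forall>j. eps (Suc j) < eps j"
    and eps_summable: "summable eps"
    and eps_le: "\<forall>j. ereal (eps j) \<le> \<delta>"
    and ell_range: "\<forall>t>0. 0 \<le> ell t \<and> ell t \<le> 1/2"
    and ell_mono: "\<forall>a b. 0 < a \<and> a \<le> b \<longrightarrow> ell b \<le> ell a"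
    and ell_lim: "(ell \<longlongrightarrow> 0) (at_right 0)"
    and \<Delta>0: "\<Delta> 0 > 0"
    and c0: "c 0 = (\<lambda>_. 0)"
    and nonterm: "\<forall>k. g (x k) \<noteq> 0"
    and cauchy: "\<forall>k. 0 \<le> \<alpha>C k \<and> \<alpha>C k \<le> \<Delta> k / norm (g (x k)) \<and>
         (\<forall>t. 0 \<le> t \<and> t \<le> \<Delta> k / norm (g (x k)) \<longrightarrow>
            tr_model (psi (x k)) (g (x k)) (B k) (- (\<alpha>C k *\<^sub>R g (x k)))
              \<le> tr_model (psi (x k)) (g (x k)) (B k) (- (t *\<^sub>R g (x k))))"
    and sC_def: "\<forall>k. sC k = - (\<alpha>C k *\<^sub>R g (x k))"
    and s_tr: "\<forall>k. norm (s k) \<le> \<Delta> k"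
    and s_dec1: "\<forall>k. tr_model (psi (x k)) (g (x k)) (B k) 0 - tr_model (psi (x k)) (g (x k)) (B k) (s k)
         \<ge> \<gamma>1 / 2 * norm (g (x k)) * min (\<Delta> k) (\<gamma>2 * norm (g (x k)))"
    and s_dec2: "\<forall>k. tr_model (psi (x k)) (g (x k)) (B k) 0 - tr_model (psi (x k)) (g (x k)) (B k) (s k)
         \<ge> (1 - ell (norm (s k))) * (tr_model (psi (x k)) (g (x k)) (B k) 0
                                     - tr_model (psi (x k)) (g (x k)) (B k) (sC k))"
    and \<rho>1_def: "\<forall>k. \<rho>1 k = (psi (x k) - psi (x k + s k)) /
         (tr_model (psi (x k)) (g (x k)) (B k) 0 - tr_model (psi (x k)) (g (x k)) (B k) (s k))"
    and ssel_def: "\<forall>k. ssel k =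
         (if tr_model (psi (x k)) (g (x k)) (B k) 0
             - tr_model (psi (x k)) (g (x k)) (B k) (safe_step Gs (x k) (s k) *\<^sub>R sgn (s k))
           < safe_step Gs (x k) (s k) / (2 * norm (s k)) *
             (tr_model (psi (x k)) (g (x k)) (B k) 0 - tr_model (psi (x k)) (g (x k)) (B k) (s k))
          then sC k else s k)"
    and sbar_def: "\<forall>k. sbar k = sgn (ssel k)"
    and \<alpha>_def: "\<forall>k. \<alpha> k = safe_step Gs (x k) (ssel k)"
    and \<rho>2_def: "\<forall>k. \<rho>2 k = (psi (x k) - psi (x k + \<alpha> k *\<^sub>R sbar k)) /
         (tr_model (psi (x k)) (g (x k)) (B k) 0
            - tr_model (psi (x k)) (g (x k)) (B k) (\<alpha> k *\<^sub>R sbar k))"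
    and update: "\<forall>k. (\<rho>1 k \<ge> \<eta>1 \<longrightarrow> xt k = x k + s k \<and>
            \<Delta> (Suc k) = (if \<rho>1 k > \<eta>2 then min \<Delta>max (r2 * \<Delta> k) else \<Delta> k)) \<and>
         (\<rho>1 k < \<eta>1 \<longrightarrow>
            \<Delta> (Suc k) = (if \<rho>2 k < \<eta>1 then r1 * \<Delta> k
                          else if \<rho>2 k > \<eta>2 then min \<Delta>max (r2 * \<Delta> k) else \<Delta> k) \<and>
            xt k = (if \<rho>2 k \<ge> \<eta> then x k + \<alpha> k *\<^sub>R sbar k else x k))"
    and trunc_step: "\<forall>k. trunc_loop (Gamma_min psi) S m T eps (c k) (xt k) (c (Suc k)) (x (Suc k))"
    and A1: "bdd_below (range psi)"
    and A2: "\<forall>y. g y \<noteq> 0 \<longrightarrow> (\<exists>r>0. \<exists>e>0. \<forall>z\<in>ball y r. norm (g z) \<ge> e)"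
    and B1: "\<exists>R>0. \<forall>k. x k \<in> ball 0 R"
    and B2: "\<exists>\<kappa>B>0. \<forall>k. norm (B k) \<le> \<kappa>B"
    and B3: "\<forall>kl. strict_mono kl \<and> convergent (\<lambda>l. x (kl l)) \<and> (\<lambda>l. \<alpha> (kl l)) \<longlonglongrightarrow> 0 \<longrightarrow>
         (\<lambda>l. psi (x (kl l) + \<alpha> (kl l) *\<^sub>R sbar (kl l)) - psi (x (kl l))
               - \<alpha> (kl l) * dir_deriv psi (x (kl l)) (sbar (kl l)))
           \<in> o[sequentially](\<lambda>l. \<alpha> (kl l))"
    and B4: "\<forall>e>0. \<exists>e'>0. \<forall>k. Gamma_min psi (x k) \<ge> ereal e \<longrightarrow> Gs (x k) (sbar k) \<ge> ereal e'"
  shows "\<forall>L. sym_posdef L \<longrightarrow> (\<lambda>k. norm (Fnat L gradf phi (x k))) \<longlonglongrightarrow> 0"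
proof -
  obtain R where R: "\<forall>k. x k \<in> ball 0 R" using B1 by blast
  obtain \<kappa>B where \<kappa>B: "\<kappa>B > 0" "\<forall>k. norm (B k) \<le> \<kappa>B" using B2 by blast
  interpret trust_region_run f phi psi gradf u d g Gs S m \<delta> \<kappa> T \<eta> \<eta>1 \<eta>2 r1 r2 \<Delta>max \<gamma>1 \<gamma>2 eps ell
      x xt s sC ssel sbar B \<Delta> \<alpha>C \<rho>1 \<rho>2 \<alpha> c R \<kappa>B
    by unfold_locales (fact assms R \<kappa>B)+
  show ?thesis using Fnat_tendsto_0 by blast
qed

end
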